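(* Let $1\le k<n$. Then $\mathbb{Y}_{OG(k,2n)}=\Theta(k,2n)$, and $F_k:\mathbb{Y}_{OG(k,2n)}\to\tilde P(n-k,n)$ is a bijection.
   Context: Root system $D_n$: positive roots $e_a\pm e_b$ ($a<b$); simple roots $e_i-e_{i+1}$ ($i<n$), $e_{n-1}+e_n$; order $\alpha\le\beta$ iff $\beta-\alpha$ is a nonnegative integer combination of simple roots. $W^{OG(k,2n)}$ is the set of signed permutations $w=(y_1,\dots,y_{k-r},\overline{z_r},\dots,\overline{z_1},v_1,\dots,v_{n-k-1},\widehat{v_{n-k}})$ of $1,\dots,n$ with an even number of barred (negative) entries, $0\le r\le k$, $y_1<\dots<y_{k-r}$, $z_r>\dots>z_1$, $v_1<\dots<v_{n-k}$, $\widehat{v_{n-k}}\in\{v_{n-k},\overline{v_{n-k}}\}$ according to the parity of $r$; $w$ acts by $e_a\mapsto\pm e_{|w(a)|}$, $\mathrm{Inv}(w)$ is the set of positive roots sent to negative roots, and $\mathbb{Y}_{OG(k,2n)}=\{\mathrm{Inv}(w)\}$. Base region: $e_a\pm e_b$, $a\le k<b$; $i$-th double-tailed diamond: $e_{k+1-i}\pm e_b$, $b>k$. Top region: $e_a+e_b$, $a<b\le k$. For a set $S$, $\lambda^{(1)}_i$ = number of roots of $S$ in diamond $i$, $\lambda^{(2)}_i$ = number of roots of $S$ of the form $e_a+e_{k+1-i}$ with $a<k+1-i$; if $\lambda^{(1)}_i=n-k$ for some $i$, $S$ is assigned $\uparrow$ if it contains $e_{k+1-i}-e_n$ and $\downarrow$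 if it contains $e_{k+1-i}+e_n$. $F_k(S)=((\lambda^{(1)}_i+\lambda^{(2)}_i)_i;t)$ with $t=1$ if $\uparrow$, $2$ if $\downarrow$, $0$ otherwise. $\Theta(k,2n)$ is the set of subsets $S$ of the union of the two regions meeting each region in a lower order ideal and such that for each top root $e_a+e_b$, $e_a+e_b\in S$ whenever $S$ contains more than $2n-2k$ roots of the diamonds indexed by $a$ and $b$ (diamonds $k+1-a$, $k+1-b$) combined, and $e_a+e_b\notin S$ whenever fewer. $\tilde P(n-k,n)$ is the set of pairs $(\gamma;t)$ with $\gamma=(\gamma_1\ge\dots\ge\gamma_k\ge0)$, $\gamma_1\le 2n-1-k$, $\gamma_i>\gamma_{i+1}$ whenever $\gamma_i>n-k$, and $t=0$ if no part equals $n-k$, $t\in\{1,2\}$ otherwise. *)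

theory Defs
  imports "HOL-Library.Multiset"
begin

text \<open>Vectors in Z^n are functions nat => int (coordinates 1..n).
  Root constructors: rp a b = e_a + e_b, rm a b = e_a - e_b.\<close>

definition ev :: "nat \<Rightarrow> nat \<Rightarrow> int" where
  "ev a = (\<lambda>j. if j = a then 1 else 0)"

definition rp :: "nat \<Rightarrow> nat \<Rightarrow> nat \<Rightarrow> int" where
  "rp a b = (\<lambda>j. ev a j + ev b j)"

definition rm :: "nat \<Rightarrow> nat \<Rightarrow> nat \<Rightarrow> int" where
  "rm a b = (\<lambda>j. ev a j - ev b j)"

definition pos_roots :: "nat \<Rightarrow> (nat \<Rightarrow> int) set" where
  "pos_roots n = {rm a b | a b. 1 \<le> a \<and> a < b \<and> b \<le> n}
               \<union> {rp a b | a b. 1 \<le> a \<and> a < b \<and> b \<le> n}"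

definition simple_root :: "nat \<Rightarrow> nat \<Rightarrow> nat \<Rightarrow> int" where
  "simple_root n i = (if i < n then rm i (i + 1) else rp (n - 1) n)"

definition root_le :: "nat \<Rightarrow> (nat \<Rightarrow> int) \<Rightarrow> (nat \<Rightarrow> int) \<Rightarrow> bool" where
  "root_le n \<alpha> \<beta> \<longleftrightarrow> (\<exists>c :: nat \<Rightarrow> nat. \<forall>j.
      \<beta> j - \<alpha> j = (\<Sum>i\<in>{1..n}. int (c i) * simple_root n i j))"

text \<open>A signed permutation is a list w of length n, w!(a-1) = w(a) (nonzero integer).
  Action: e_a |-> sgn(w(a)) e_{|w(a)|}, extended linearly.\<close>
definition act :: "nat \<Rightarrow> int list \<Rightarrow> (nat \<Rightarrow> int) \<Rightarrow> (nat \<Rightarrow> int)" where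
  "act n w v = (\<lambda>j. \<Sum>a\<in>{1..n}.
      if nat \<bar>w ! (a - 1)\<bar> = j then sgn (w ! (a - 1)) * v a else 0)"

definition Inv :: "nat \<Rightarrow> int list \<Rightarrow> (nat \<Rightarrow> int) set" where
  "Inv n w = {\<beta> \<in> pos_roots n. (\<lambda>j. - act n w \<beta> j) \<in> pos_roots n}"

text \<open>W^{OG(k,2n)}: w = (y_1..y_{k-r}, -z_r..-z_1, v_1..v_{n-k-1}, hat v_{n-k}),
  zs = [z_1,...,z_r] increasing, so the barred block is rev zs.\<close>
definition W_OG :: "nat \<Rightarrow> nat \<Rightarrow> int list set" where
  "W_OG k n = {w. \<exists>r ys zs vs.
      r \<le> k \<and> length ys = k - r \<and> length zs = r \<and> length vs = n - k \<and>
      sorted_wrt (<) (ys :: nat list) \<and> sorted_wrt (<) zs \<and> sorted_wrt (<) vs \<and>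
      mset (ys @ zs @ vs) = mset [1..<n + 1] \<and>
      w = map int ys @ map (\<lambda>z. - int z) (rev zs) @ map int (butlast vs)
          @ [if even r then int (last vs) else - int (last vs)] \<and>
      even (length (filter (\<lambda>x::int. x < 0) w))}"

definition Y_OG :: "nat \<Rightarrow> nat \<Rightarrow> (nat \<Rightarrow> int) set set" where
  "Y_OG k n = Inv n ` W_OG k n"

definition base_region :: "nat \<Rightarrow> nat \<Rightarrow> (nat \<Rightarrow> int) set" where
  "base_region k n = {rm a b | a b. 1 \<le> a \<and> a \<le> k \<and> k < b \<and> b \<le> n}
                   \<union> {rp a b | a b. 1 \<le> a \<and> a \<le> k \<and> k < b \<and> b \<le> n}"

definition top_region :: "nat \<Rightarrow> (nat \<Rightarrow> int) set" where
  "top_region k = {rp a b | a b. 1 \<le> a \<and> a < b \<and> b \<le> k}"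

definition diamond :: "nat \<Rightarrow> nat \<Rightarrow> nat \<Rightarrow> (nat \<Rightarrow> int) set" where
  "diamond k n i = {rm (k + 1 - i) b | b. k < b \<and> b \<le> n}
                 \<union> {rp (k + 1 - i) b | b. k < b \<and> b \<le> n}"

definition lower_ideal_in :: "nat \<Rightarrow> (nat \<Rightarrow> int) set \<Rightarrow> (nat \<Rightarrow> int) set \<Rightarrow> bool" where
  "lower_ideal_in n R I \<longleftrightarrow> I \<subseteq> R \<and>
     (\<forall>\<beta>\<in>I. \<forall>\<alpha>\<in>R. root_le n \<alpha> \<beta> \<longrightarrow> \<alpha> \<in> I)"

definition Theta :: "nat \<Rightarrow> nat \<Rightarrow> (nat \<Rightarrow> int) set set" where
  "Theta k n = {S. S \<subseteq> base_region k n \<union> top_region k \<and>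
      lower_ideal_in n (base_region k n) (S \<inter> base_region k n) \<and>
      lower_ideal_in n (top_region k) (S \<inter> top_region k) \<and>
      (\<forall>a b. 1 \<le> a \<and> a < b \<and> b \<le> k \<longrightarrow>
         (card (S \<inter> (diamond k n (k + 1 - a) \<union> diamond k n (k + 1 - b))) > 2 * n - 2 * k
              \<longrightarrow> rp a b \<in> S) \<and>
         (card (S \<inter> (diamond k n (k + 1 - a) \<union> diamond k n (k + 1 - b))) < 2 * n - 2 * k
              \<longrightarrow> rp a b \<notin> S))}"

definition lam1 :: "nat \<Rightarrow> nat \<Rightarrow> (nat \<Rightarrow> int) set \<Rightarrow> nat \<Rightarrow> nat" where
  "lam1 k n S i = card (S \<inter> diamond k n i)"

definition lam2 :: "nat \<Rightarrow> (nat \<Rightarrow> int) set \<Rightarrow> nat \<Rightarrow> nat" where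
  "lam2 k S i = card {\<beta> \<in> S. \<exists>a. 1 \<le> a \<and> a < k + 1 - i \<and> \<beta> = rp a (k + 1 - i)}"

text \<open>Decoration t: 1 for up-arrow, 2 for down-arrow, 0 otherwise; the index i is the
  least one with lam1 = n - k.\<close>
definition F_tag :: "nat \<Rightarrow> nat \<Rightarrow> (nat \<Rightarrow> int) set \<Rightarrow> nat" where
  "F_tag k n S =
     (if \<exists>i. 1 \<le> i \<and> i \<le> k \<and> lam1 k n S i = n - k then
        (let i = (LEAST i. 1 \<le> i \<and> i \<le> k \<and> lam1 k n S i = n - k) in
         if rm (k + 1 - i) n \<in> S then 1 else if rp (k + 1 - i) n \<in> S then 2 else 0)
      else 0)"

definition F :: "nat \<Rightarrow> nat \<Rightarrow> (nat \<Rightarrow> int) set \<Rightarrow> nat list \<times> nat" where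
  "F k n S = (map (\<lambda>i. lam1 k n S i + lam2 k S i) [1..<k + 1], F_tag k n S)"

text \<open>tilde P(n-k,n): gamma as the list [gamma_1,...,gamma_k].\<close>
definition Ptilde :: "nat \<Rightarrow> nat \<Rightarrow> (nat list \<times> nat) set" where
  "Ptilde k n = {(\<gamma>, t). length \<gamma> = k \<and>
      (\<forall>i. i + 1 < k \<longrightarrow> \<gamma> ! (i + 1) \<le> \<gamma> ! i) \<and>
      (\<forall>i<k. \<gamma> ! i \<le> 2 * n - 1 - k) \<and>
      (\<forall>i. i + 1 < k \<longrightarrow> \<gamma> ! i > n - k \<longrightarrow> \<gamma> ! i > \<gamma> ! (i + 1)) \<and>
      (if n - k \<in> set \<gamma> then t \<in> {1, 2} else t = 0)}"

end

theory Submission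
  imports Defs
begin

text \<open>The root order of $D_n$ is read off prefix sums: $\beta - \alpha$ is a nonnegative
  combination of simple roots iff its prefix sums up to $n - 2$ are nonnegative and
  $\sum_{j<n} x_j \pm x_n \ge 0$. For $w \in W^{OG(k,2n)}$ the sign pattern of $w$ makes membership
  of each root in $\mathrm{Inv}(w)$ an explicit comparison of $|w(a)|$ and $|w(b)|$, from which
  $\mathrm{Inv}(w) \in \Theta(k,2n)$ follows. Conversely, for $S \in \Theta(k,2n)$ the ideal
  conditions make $S$ meet each diamond in an initial segment of the roots $e_c - e_d$ and a final
  segment of the roots $e_c + e_d$, and each column of the top region in an upward closed set;
  the threshold conditions then let one recover the diamond counts, the columns and finally $S$
  from $F_k(S)$, so $F_k$ is injective on $\Theta(k,2n)$ and lands in $\tilde P(n-k,n)$. Every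
  element of $\tilde P(n-k,n)$ is $F_k(\mathrm{Inv}(w))$ for an explicitly constructed $w$, hence
  $\mathbb{Y}_{OG(k,2n)} = \Theta(k,2n)$ and $F_k$ is a bijection.\<close>

section \<open>The root order of $D_n$ via prefix sums\<close>

definition prefix_sum :: "(nat \<Rightarrow> int) \<Rightarrow> nat \<Rightarrow> int" where
  "prefix_sum x p = (\<Sum>j\<in>{1..p}. x j)"

lemma prefix_sum_0[simp]: "prefix_sum x 0 = 0" by (simp add: prefix_sum_def)
lemma prefix_sum_Suc: "prefix_sum x (Suc p) = prefix_sum x p + x (Suc p)"
  by (simp add: prefix_sum_def add.commute)

lemma prefix_sum_ev: "prefix_sum (ev a) p = (if 1 \<le> a \<and> a \<le> p then 1 else 0)"
  by (induction p) (auto simp: prefix_sum_Suc ev_def)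

lemma prefix_sum_rm: "prefix_sum (rm a b) p = prefix_sum (ev a) p - prefix_sum (ev b) p"
  unfolding prefix_sum_def rm_def by (simp add: sum_subtractf)
lemma prefix_sum_rp: "prefix_sum (rp a b) p = prefix_sum (ev a) p + prefix_sum (ev b) p"
  unfolding prefix_sum_def rp_def by (simp add: sum.distrib)

lemma sum_simple_roots_eq:
  assumes "2 \<le> n"
  shows "(\<Sum>i\<in>{1..n}. int (c i) * simple_root n i j) =
     (if 1 \<le> j \<and> j < n then int (c j) else 0) - (if 2 \<le> j \<and> j \<le> n then int (c (j-1)) else 0)
     + (if n - 1 \<le> j \<and> j \<le> n then int (c n) else 0)"
proof -
  have split: "{1..n} = insert n {1..<n}" using assms by auto
  have "(\<Sum>i\<in>{1..n}. int (c i) * simple_root n i j) =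
        int (c n) * simple_root n n j + (\<Sum>i\<in>{1..<n}. int (c i) * simple_root n i j)"
    by (subst split) simp
  also have "(\<Sum>i\<in>{1..<n}. int (c i) * simple_root n i j) =
      (\<Sum>i\<in>{1..<n}. (if i = j then int (c i) else 0)) - (\<Sum>i\<in>{1..<n}. (if i + 1 = j then int (c i) else 0))"
    by (subst sum_subtractf[symmetric], rule sum.cong)
       (auto simp: simple_root_def rm_def ev_def)
  also have "(\<Sum>i\<in>{1..<n}. (if i = j then int (c i) else 0)) = (if 1 \<le> j \<and> j < n then int (c j) else 0)"
    by (simp add: sum.delta')
  also have "(\<Sum>i\<in>{1..<n}. (if i + 1 = j then int (c i) else 0)) =
             (\<Sum>i\<in>{1..<n}. (if i = j - 1 \<and> 1 \<le> j then int (c i) else 0))"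
    by (rule sum.cong) auto
  also have "\<dots> = (if 2 \<le> j \<and> j \<le> n then int (c (j-1)) else 0)"
  proof (cases "1 \<le> j")
    case True
    then show ?thesis by (simp add: sum.delta' split: if_splits) (auto)
  next
    case False then show ?thesis by simp
  qed
  finally show ?thesis using assms
    by (auto simp: simple_root_def rp_def ev_def)
qed

lemmas sum_simple_roots = sum_simple_roots_eq[simplified]

definition nonneg_prefix_sums :: "nat \<Rightarrow> (nat \<Rightarrow> int) \<Rightarrow> bool" where
  "nonneg_prefix_sums n d \<longleftrightarrow> (\<forall>p. 1 \<le> p \<and> p \<le> n - 2 \<longrightarrow> 0 \<le> prefix_sum d p) \<and>
     d n \<le> prefix_sum d (n - 1) \<and> 0 \<le> prefix_sum d (n - 1) + d n"

lemma prefix_sum_comb: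
  assumes n: "2 \<le> n" and d: "\<And>j. d j = (\<Sum>i\<in>{1..n}. int (c i) * simple_root n i j)"
  shows "1 \<le> p \<Longrightarrow> p \<le> n - 1 \<Longrightarrow> prefix_sum d p = int (c p) + (if p = n - 1 then int (c n) else 0)"
proof (induction p rule: nat_induct_at_least)
  case base
  then show ?case using n by (simp add: prefix_sum_def d sum_simple_roots)
next
  case (Suc p)
  have "prefix_sum d (Suc p) = prefix_sum d p + d (Suc p)" by (simp add: prefix_sum_Suc)
  also have "d (Suc p) = int (c (Suc p)) - int (c p) + (if Suc p = n - 1 then int (c n) else 0)"
    using \<open>1 \<le> p\<close> \<open>Suc p \<le> n - 1\<close> n by (auto simp add: d sum_simple_roots intro!: arg_cong[where f=c])
  also have "prefix_sum d p = int (c p)" using Suc by simp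
  finally have "prefix_sum d (Suc p) = int (c (Suc p)) + (if Suc p = n - 1 then int (c n) else 0)" by simp
  then show ?case .
qed

lemma last_coord_simple_comb:
  assumes n: "2 \<le> n" and d: "\<And>j. d j = (\<Sum>i\<in>{1..n}. int (c i) * simple_root n i j)"
  shows "d n = int (c n) - int (c (n - 1))"
  using n by (auto simp add: d sum_simple_roots intro!: arg_cong[where f=c])

lemma eq_if_prefix_sums_eq:
  assumes x: "\<And>j. j = 0 \<or> n < j \<Longrightarrow> x j = 0" and y: "\<And>j. j = 0 \<or> n < j \<Longrightarrow> y j = 0"
    and sums: "\<And>p. p < n \<Longrightarrow> prefix_sum x p = prefix_sum y p" and last: "x n = y n"
  shows "x = y"
proof
  fix j
  show "x j = y j"
  proof (cases "j = 0 \<or> n \<le> j")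
    case True
    then show ?thesis using x y last by (cases "j = n") auto
  next
    case False
    then obtain i where "j = Suc i" "Suc i < n" by (cases j) auto
    then show ?thesis using sums[of i] sums[of "Suc i"] by (simp add: prefix_sum_Suc)
  qed
qed

lemma simple_comb_imp_nonneg_prefix_sums:
  assumes n: "2 \<le> n" and c: "\<And>j. d j = (\<Sum>i\<in>{1..n}. int (c i) * simple_root n i j)"
  shows "nonneg_prefix_sums n d"
proof -
  have "\<And>p. 1 \<le> p \<Longrightarrow> p \<le> n - 2 \<Longrightarrow> 0 \<le> prefix_sum d p"
    using prefix_sum_comb[OF n c] by fastforce
  moreover have "prefix_sum d (n - 1) = int (c (n-1)) + int (c n)"
    using prefix_sum_comb[OF n c, of "n-1"] n by simp
  moreover have "d n = int (c n) - int (c (n - 1))" by (rule last_coord_simple_comb[OF n c])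
  ultimately show ?thesis unfolding nonneg_prefix_sums_def by auto
qed

lemma nonneg_prefix_sums_imp_simple_comb:
  assumes n: "2 \<le> n" and supp: "\<And>j. j = 0 \<or> n < j \<Longrightarrow> d j = 0"
    and ev: "even (prefix_sum d n)" and rc: "nonneg_prefix_sums n d"
  shows "\<exists>c::nat\<Rightarrow>nat. \<forall>j. d j = (\<Sum>i\<in>{1..n}. int (c i) * simple_root n i j)"
proof -
  define P where "P = prefix_sum d (n - 1)"
  have "prefix_sum d n = P + d n" using n unfolding P_def
    by (metis Suc_diff_1 less_le_trans numeral_2_eq_2 prefix_sum_Suc zero_less_Suc)
  then have even: "even (P - d n)" "even (P + d n)" using ev by presburger+
  define c :: "nat \<Rightarrow> nat" where "c = (\<lambda>i. if i = n then nat ((P + d n) div 2)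
      else if i = n - 1 then nat ((P - d n) div 2) else nat (prefix_sum d i))"
  have cn: "int (c n) = (P + d n) div 2" using rc n unfolding c_def nonneg_prefix_sums_def P_def by auto
  have cn1: "int (c (n-1)) = (P - d n) div 2" using rc n unfolding c_def nonneg_prefix_sums_def P_def by auto
  have cp: "\<And>p. 1 \<le> p \<Longrightarrow> p \<le> n - 2 \<Longrightarrow> int (c p) = prefix_sum d p"
    using rc n unfolding c_def nonneg_prefix_sums_def by auto
  have sum2: "int (c (n-1)) + int (c n) = P" using cn cn1 even by presburger
  have diff2: "int (c n) - int (c (n-1)) = d n" using cn cn1 even by presburger
  define e where "e = (\<lambda>j. \<Sum>i\<in>{1..n}. int (c i) * simple_root n i j)"
  have e: "\<And>j. e j = (\<Sum>i\<in>{1..n}. int (c i) * simple_root n i j)" unfolding e_def ..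
  have "d = e"
  proof (rule eq_if_prefix_sums_eq[OF supp])
    show "\<And>j. j = 0 \<or> n < j \<Longrightarrow> e j = 0" using n by (auto simp: e sum_simple_roots)
    show "prefix_sum d p = prefix_sum e p" if "p < n" for p
    proof (cases "p = 0")
      case False
      then have "p = n - 1 \<or> p \<le> n - 2" using that by linarith
      then show ?thesis
        using prefix_sum_comb[OF n e, of p] that False cp[of p] sum2 unfolding P_def by auto
    qed simp
    show "d n = e n" using last_coord_simple_comb[OF n e] diff2 by simp
  qed
  then show ?thesis by (intro exI[of _ c]) (simp add: e)
qed

lemma nonneg_simple_comb_iff:
  assumes "2 \<le> n" "\<And>j. j = 0 \<or> n < j \<Longrightarrow> d j = 0" "even (prefix_sum d n)"
  shows "(\<exists>c::nat\<Rightarrow>nat. \<forall>j. d j = (\<Sum>i\<in>{1..n}. int (c i) * simple_root n i j)) \<longleftrightarrow> nonneg_prefix_sums n d"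
  using simple_comb_imp_nonneg_prefix_sums[OF assms(1)] nonneg_prefix_sums_imp_simple_comb[OF assms]
  by blast

definition pair_vec :: "nat \<Rightarrow> (nat \<Rightarrow> int) \<Rightarrow> bool" where
  "pair_vec n x \<longleftrightarrow> (\<exists>a b. 1 \<le> a \<and> a \<le> n \<and> 1 \<le> b \<and> b \<le> n \<and> (x = rm a b \<or> x = rp a b))"

lemma prefix_sum_rm': "1 \<le> a \<Longrightarrow> 1 \<le> b \<Longrightarrow> prefix_sum (rm a b) p = (if a \<le> p then 1 else 0) - (if b \<le> p then 1 else 0)"
  by (simp add: prefix_sum_rm prefix_sum_ev)
lemma prefix_sum_rp': "1 \<le> a \<Longrightarrow> 1 \<le> b \<Longrightarrow> prefix_sum (rp a b) p = (if a \<le> p then 1 else 0) + (if b \<le> p then 1 else 0)"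
  by (simp add: prefix_sum_rp prefix_sum_ev)
lemma rm_apply: "rm a b j = (if j = a then 1 else 0) - (if j = b then 1 else 0)"
  by (simp add: rm_def ev_def)
lemma rp_apply: "rp a b j = (if j = a then 1 else 0) + (if j = b then 1 else 0)"
  by (simp add: rp_def ev_def)

lemma prefix_sum_diff: "prefix_sum (\<lambda>j. x j - y j) p = prefix_sum x p - prefix_sum y p"
  by (simp add: prefix_sum_def sum_subtractf)

lemma pair_vec_support: "pair_vec n x \<Longrightarrow> j = 0 \<or> n < j \<Longrightarrow> x j = 0"
  unfolding pair_vec_def by (auto simp: rm_apply rp_apply)

lemma pair_vec_even_sum: "pair_vec n x \<Longrightarrow> even (prefix_sum x n)"
  unfolding pair_vec_def by (auto simp: prefix_sum_rm' prefix_sum_rp')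

lemma root_le_iff_prefix_sums:
  assumes n: "2 \<le> n" and r: "pair_vec n \<alpha>" "pair_vec n \<beta>"
  shows "root_le n \<alpha> \<beta> \<longleftrightarrow>
     (\<forall>p. 1 \<le> p \<and> p \<le> n - 2 \<longrightarrow> prefix_sum \<alpha> p \<le> prefix_sum \<beta> p) \<and>
     prefix_sum \<alpha> (n - 1) - \<alpha> n \<le> prefix_sum \<beta> (n - 1) - \<beta> n \<and>
     prefix_sum \<alpha> (n - 1) + \<alpha> n \<le> prefix_sum \<beta> (n - 1) + \<beta> n"
proof -
  have "root_le n \<alpha> \<beta> \<longleftrightarrow> nonneg_prefix_sums n (\<lambda>j. \<beta> j - \<alpha> j)"
    unfolding root_le_def
  proof (rule nonneg_simple_comb_iff[OF n])
    show "\<And>j. j = 0 \<or> n < j \<Longrightarrow> \<beta> j - \<alpha> j = 0" using pair_vec_support[OF r(1)] pair_vec_support[OF r(2)] by simp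
    show "even (prefix_sum (\<lambda>j. \<beta> j - \<alpha> j) n)" using pair_vec_even_sum r by (simp add: prefix_sum_diff)
  qed
  then show ?thesis unfolding nonneg_prefix_sums_def prefix_sum_diff by auto
qed

lemma pair_vec_rm: "1 \<le> a \<Longrightarrow> a \<le> n \<Longrightarrow> 1 \<le> b \<Longrightarrow> b \<le> n \<Longrightarrow> pair_vec n (rm a b)"
  unfolding pair_vec_def by blast
lemma pair_vec_rp: "1 \<le> a \<Longrightarrow> a \<le> n \<Longrightarrow> 1 \<le> b \<Longrightarrow> b \<le> n \<Longrightarrow> pair_vec n (rp a b)"
  unfolding pair_vec_def by blast

lemma rm_eq_iff: "a \<noteq> b \<Longrightarrow> c \<noteq> d \<Longrightarrow> rm a b = rm c d \<longleftrightarrow> a = c \<and> b = d"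
proof
  assume ab: "a \<noteq> b" "c \<noteq> d" and e: "rm a b = rm c d"
  have "rm a b a = 1" "rm a b b = -1" using ab by (simp_all add: rm_apply)
  then have 1: "rm c d a = 1" and 2: "rm c d b = -1" using e by simp_all
  have "a = c" using 1 ab(2) unfolding rm_apply by (cases "a = c"; cases "a = d") auto
  moreover have "b = d" using 2 ab(2) unfolding rm_apply by (cases "b = c"; cases "b = d") auto
  ultimately show "a = c \<and> b = d" by simp
qed auto

lemma rp_eq_iff: "a < b \<Longrightarrow> c < d \<Longrightarrow> rp a b = rp c d \<longleftrightarrow> a = c \<and> b = d"
proof
  assume ab: "a < b" "c < d" and e: "rp a b = rp c d"
  have "rp a b a = rp c d a" "rp a b b = rp c d b" "rp a b c = rp c d c" "rp a b d = rp c d d"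
    using e by auto
  then show "a = c \<and> b = d" using ab by (auto simp: rp_apply split: if_splits)
qed auto

lemma rm_neq_rp: "a \<noteq> b \<Longrightarrow> rm a b \<noteq> rp c d"
proof
  assume "a \<noteq> b" "rm a b = rp c d"
  then have "rm a b b = rp c d b" by simp
  then show False using \<open>a \<noteq> b\<close> by (auto simp: rm_apply rp_apply split: if_splits)
qed

section \<open>Inversion sets of signed permutations\<close>

definition signed_unit :: "int \<Rightarrow> nat \<Rightarrow> nat \<Rightarrow> int" where
  "signed_unit s p = (\<lambda>j. if p = j then s else 0)"

lemma signed_pair_in_pos_roots_iff:
  assumes pq: "p \<noteq> q" "1 \<le> p" "p \<le> n" "1 \<le> q" "q \<le> n"
    and s: "s = 1 \<or> s = -1" and t: "t = 1 \<or> t = -1"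
  shows "(\<lambda>j. signed_unit s p j + signed_unit t q j) \<in> pos_roots n \<longleftrightarrow>
    (s = 1 \<and> t = 1) \<or> (s = 1 \<and> t = -1 \<and> p < q) \<or> (s = -1 \<and> t = 1 \<and> q < p)"
proof
  assume x: "(\<lambda>j. signed_unit s p j + signed_unit t q j) \<in> pos_roots n"
  let ?x = "(\<lambda>j. signed_unit s p j + signed_unit t q j)"
  have xp: "?x p = s" and xq: "?x q = t" using pq by (auto simp: signed_unit_def)
  from x obtain a b where ab: "1 \<le> a" "a < b" "b \<le> n" and "?x = rm a b \<or> ?x = rp a b"
    unfolding pos_roots_def by blast
  from this(4) show "(s = 1 \<and> t = 1) \<or> (s = 1 \<and> t = -1 \<and> p < q) \<or> (s = -1 \<and> t = 1 \<and> q < p)"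
  proof
    assume "?x = rm a b"
    then have "rm a b p = s" "rm a b q = t" using xp xq by metis+
    then show ?thesis using s t pq ab by (auto simp: rm_apply split: if_splits)
  next
    assume "?x = rp a b"
    then have "rp a b p = s" "rp a b q = t" using xp xq by metis+
    then show ?thesis using s t pq ab by (auto simp: rp_apply split: if_splits)
  qed
next
  let ?x = "(\<lambda>j. signed_unit s p j + signed_unit t q j)"
  assume "(s = 1 \<and> t = 1) \<or> (s = 1 \<and> t = -1 \<and> p < q) \<or> (s = -1 \<and> t = 1 \<and> q < p)"
  then consider "s = 1" "t = 1" "p < q" | "s = 1" "t = 1" "q < p"
    | "s = 1" "t = -1" "p < q" | "s = -1" "t = 1" "q < p"
    using pq(1) by (meson linorder_neqE_nat)
  then show "?x \<in> pos_roots n"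
  proof cases
    case 1
    then have "?x = rp p q" by (auto simp: fun_eq_iff signed_unit_def rp_apply)
    then show ?thesis using 1 pq unfolding pos_roots_def by blast
  next
    case 2
    then have "?x = rp q p" by (auto simp: fun_eq_iff signed_unit_def rp_apply)
    then show ?thesis using 2 pq unfolding pos_roots_def by blast
  next
    case 3
    then have "?x = rm p q" by (auto simp: fun_eq_iff signed_unit_def rm_apply)
    then show ?thesis using 3 pq unfolding pos_roots_def by blast
  next
    case 4
    then have "?x = rm q p" by (auto simp: fun_eq_iff signed_unit_def rm_apply)
    then show ?thesis using 4 pq unfolding pos_roots_def by blast
  qed
qed

text \<open>Positions are 1-based: \<open>wval w p\<close> is the entry $w(p)$, stored at \<open>w ! (p - 1)\<close>.\<close>

definition wval :: "int list \<Rightarrow> nat \<Rightarrow> int" where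
  "wval w p = w ! (p - 1)"

lemma act_ev:
  assumes "1 \<le> a" "a \<le> n"
  shows "act n w (ev a) = signed_unit (sgn (wval w a)) (nat \<bar>wval w a\<bar>)"
proof
  fix j
  have "act n w (ev a) j = (\<Sum>x\<in>{1..n}. if x = a then (if nat \<bar>w ! (x - 1)\<bar> = j then sgn (w ! (x - 1)) else 0) else 0)"
    unfolding act_def by (rule sum.cong) (auto simp: ev_def)
  also have "\<dots> = (if nat \<bar>w ! (a - 1)\<bar> = j then sgn (w ! (a - 1)) else 0)"
    using assms by (simp add: sum.delta')
  finally show "act n w (ev a) j = signed_unit (sgn (wval w a)) (nat \<bar>wval w a\<bar>) j"
    by (simp add: signed_unit_def wval_def)
qed

lemma act_diff: "act n w (\<lambda>j. u j - v j) = (\<lambda>j. act n w u j - act n w v j)"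
  unfolding act_def by (auto simp: fun_eq_iff sum_subtractf[symmetric] algebra_simps intro!: sum.cong)
lemma act_add: "act n w (\<lambda>j. u j + v j) = (\<lambda>j. act n w u j + act n w v j)"
  unfolding act_def by (auto simp: fun_eq_iff sum.distrib[symmetric] algebra_simps intro!: sum.cong)

lemma act_rm: "1 \<le> a \<Longrightarrow> a \<le> n \<Longrightarrow> 1 \<le> b \<Longrightarrow> b \<le> n \<Longrightarrow>
   act n w (rm a b) = (\<lambda>j. signed_unit (sgn (wval w a)) (nat \<bar>wval w a\<bar>) j - signed_unit (sgn (wval w b)) (nat \<bar>wval w b\<bar>) j)"
  unfolding rm_def act_diff by (simp add: act_ev)
lemma act_rp: "1 \<le> a \<Longrightarrow> a \<le> n \<Longrightarrow> 1 \<le> b \<Longrightarrow> b \<le> n \<Longrightarrow>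
   act n w (rp a b) = (\<lambda>j. signed_unit (sgn (wval w a)) (nat \<bar>wval w a\<bar>) j + signed_unit (sgn (wval w b)) (nat \<bar>wval w b\<bar>) j)"
  unfolding rp_def act_add by (simp add: act_ev)

definition signed_perm :: "nat \<Rightarrow> int list \<Rightarrow> bool" where
  "signed_perm n w \<longleftrightarrow> (\<forall>p\<in>{1..n}. wval w p \<noteq> 0 \<and> nat \<bar>wval w p\<bar> \<in> {1..n}) \<and>
     inj_on (\<lambda>p. nat \<bar>wval w p\<bar>) {1..n}"


lemma rm_in_Inv_iff:
  assumes w_signed_perm: "signed_perm n w" and ab: "1 \<le> a" "a < b" "b \<le> n"
  shows "rm a b \<in> Inv n w \<longleftrightarrow>
    (wval w a < 0 \<and> wval w b > 0) \<or> (wval w a < 0 \<and> wval w b < 0 \<and> \<bar>wval w a\<bar> < \<bar>wval w b\<bar>)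
    \<or> (wval w a > 0 \<and> wval w b > 0 \<and> \<bar>wval w b\<bar> < \<bar>wval w a\<bar>)"
proof -
  let ?A = "wval w a" and ?B = "wval w b"
  have A: "?A \<noteq> 0" "nat \<bar>?A\<bar> \<in> {1..n}" and B: "?B \<noteq> 0" "nat \<bar>?B\<bar> \<in> {1..n}"
    using w_signed_perm ab unfolding signed_perm_def by auto
  have ne: "nat \<bar>?A\<bar> \<noteq> nat \<bar>?B\<bar>" using w_signed_perm ab unfolding signed_perm_def inj_on_def
    by (metis atLeastAtMost_iff less_imp_le_nat le_trans less_irrefl ab(2))
  have pr: "rm a b \<in> pos_roots n" using ab unfolding pos_roots_def by blast
  have "(\<lambda>j. - act n w (rm a b) j) = (\<lambda>j. signed_unit (- sgn ?A) (nat \<bar>?A\<bar>) j + signed_unit (sgn ?B) (nat \<bar>?B\<bar>) j)"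
    using ab by (simp add: act_rm signed_unit_def fun_eq_iff)
  then have "rm a b \<in> Inv n w \<longleftrightarrow> (\<lambda>j. signed_unit (- sgn ?A) (nat \<bar>?A\<bar>) j + signed_unit (sgn ?B) (nat \<bar>?B\<bar>) j) \<in> pos_roots n"
    using pr unfolding Inv_def by simp
  also have "\<dots> \<longleftrightarrow> (- sgn ?A = 1 \<and> sgn ?B = 1) \<or> (- sgn ?A = 1 \<and> sgn ?B = -1 \<and> nat \<bar>?A\<bar> < nat \<bar>?B\<bar>)
      \<or> (- sgn ?A = -1 \<and> sgn ?B = 1 \<and> nat \<bar>?B\<bar> < nat \<bar>?A\<bar>)"
    by (rule signed_pair_in_pos_roots_iff) (use A B ne in \<open>auto simp: sgn_if\<close>)
  also have "\<dots> \<longleftrightarrow> (wval w a < 0 \<and> wval w b > 0) \<or> (wval w a < 0 \<and> wval w b < 0 \<and> \<bar>wval w a\<bar> < \<bar>wval w b\<bar>)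
    \<or> (wval w a > 0 \<and> wval w b > 0 \<and> \<bar>wval w b\<bar> < \<bar>wval w a\<bar>)" using A B by (auto simp: sgn_if)
  finally show ?thesis .
qed

lemma rp_in_Inv_iff:
  assumes w_signed_perm: "signed_perm n w" and ab: "1 \<le> a" "a < b" "b \<le> n"
  shows "rp a b \<in> Inv n w \<longleftrightarrow>
    (wval w a < 0 \<and> wval w b < 0) \<or> (wval w a < 0 \<and> wval w b > 0 \<and> \<bar>wval w a\<bar> < \<bar>wval w b\<bar>)
    \<or> (wval w a > 0 \<and> wval w b < 0 \<and> \<bar>wval w b\<bar> < \<bar>wval w a\<bar>)"
proof -
  let ?A = "wval w a" and ?B = "wval w b"
  have A: "?A \<noteq> 0" "nat \<bar>?A\<bar> \<in> {1..n}" and B: "?B \<noteq> 0" "nat \<bar>?B\<bar> \<in> {1..n}"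
    using w_signed_perm ab unfolding signed_perm_def by auto
  have ne: "nat \<bar>?A\<bar> \<noteq> nat \<bar>?B\<bar>" using w_signed_perm ab unfolding signed_perm_def inj_on_def
    by (metis atLeastAtMost_iff less_imp_le_nat le_trans less_irrefl ab(2))
  have pr: "rp a b \<in> pos_roots n" using ab unfolding pos_roots_def by blast
  have "(\<lambda>j. - act n w (rp a b) j) = (\<lambda>j. signed_unit (- sgn ?A) (nat \<bar>?A\<bar>) j + signed_unit (- sgn ?B) (nat \<bar>?B\<bar>) j)"
    using ab by (simp add: act_rp signed_unit_def fun_eq_iff)
  then have "rp a b \<in> Inv n w \<longleftrightarrow> (\<lambda>j. signed_unit (- sgn ?A) (nat \<bar>?A\<bar>) j + signed_unit (- sgn ?B) (nat \<bar>?B\<bar>) j) \<in> pos_roots n"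
    using pr unfolding Inv_def by simp
  also have "\<dots> \<longleftrightarrow> (- sgn ?A = 1 \<and> - sgn ?B = 1) \<or> (- sgn ?A = 1 \<and> - sgn ?B = -1 \<and> nat \<bar>?A\<bar> < nat \<bar>?B\<bar>)
      \<or> (- sgn ?A = -1 \<and> - sgn ?B = 1 \<and> nat \<bar>?B\<bar> < nat \<bar>?A\<bar>)"
    by (rule signed_pair_in_pos_roots_iff) (use A B ne in \<open>auto simp: sgn_if\<close>)
  also have "\<dots> \<longleftrightarrow> (wval w a < 0 \<and> wval w b < 0) \<or> (wval w a < 0 \<and> wval w b > 0 \<and> \<bar>wval w a\<bar> < \<bar>wval w b\<bar>)
    \<or> (wval w a > 0 \<and> wval w b < 0 \<and> \<bar>wval w b\<bar> < \<bar>wval w a\<bar>)" using A B by (auto simp: sgn_if)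
  finally show ?thesis .
qed

lemma Inv_subset_pos_roots: "Inv n w \<subseteq> pos_roots n" unfolding Inv_def by auto

section \<open>Sign patterns of the elements of $W^{OG(k,2n)}$\<close>

definition og_shape :: "nat \<Rightarrow> nat \<Rightarrow> nat \<Rightarrow> int list \<Rightarrow> bool" where
  "og_shape k n r w \<longleftrightarrow> r \<le> k \<and> length w = n \<and> signed_perm n w \<and>
    (\<forall>p. 1 \<le> p \<and> p \<le> k - r \<longrightarrow> wval w p > 0) \<and>
    (\<forall>p. k - r < p \<and> p \<le> k \<longrightarrow> wval w p < 0) \<and>
    (\<forall>p. k < p \<and> p < n \<longrightarrow> wval w p > 0) \<and>
    (wval w n > 0 \<longleftrightarrow> even r) \<and>
    (\<forall>p q. 1 \<le> p \<and> p < q \<and> q \<le> k - r \<longrightarrow> wval w p < wval w q) \<and>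
    (\<forall>p q. k - r < p \<and> p < q \<and> q \<le> k \<longrightarrow> wval w p < wval w q) \<and>
    (\<forall>p q. k < p \<and> p < q \<and> q \<le> n \<longrightarrow> \<bar>wval w p\<bar> < \<bar>wval w q\<bar>)"

definition og_word :: "nat \<Rightarrow> nat list \<Rightarrow> nat list \<Rightarrow> nat list \<Rightarrow> int list" where
  "og_word r ys zs vs = map int ys @ map (\<lambda>z. - int z) (rev zs) @ map int (butlast vs)
          @ [if even r then int (last vs) else - int (last vs)]"

lemma og_word_length:
  assumes "length ys = k - r" "length zs = r" "length vs = n - k" "r \<le> k" "k < n"
  shows "length (og_word r ys zs vs) = n"
  using assms unfolding og_word_def by simp

lemma og_word_nth:
  assumes l: "length ys = k - r" "length zs = r" "length vs = n - k" "r \<le> k" "k < n"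
    and i: "i < n"
  shows "og_word r ys zs vs ! i = (if i < k - r then int (ys ! i) else if i < k then - int (zs ! (k - 1 - i))
      else if i < n - 1 then int (vs ! (i - k)) else if even r then int (vs ! (n - k - 1)) else - int (vs ! (n - k - 1)))"
proof -
  have vs: "vs \<noteq> []" using l by auto
  have lb: "length (butlast vs) = n - k - 1" using l by simp
  have last: "last vs = vs ! (n - k - 1)" using vs l by (simp add: last_conv_nth)
  show ?thesis
  proof (cases "i < k - r")
    case True then show ?thesis using l unfolding og_word_def by (simp add: nth_append)
  next
    case f1: False
    show ?thesis
    proof (cases "i < k")
      case True
      have ir: "i - (k - r) < r" using True f1 l by arith
      have "og_word r ys zs vs ! i = (map (\<lambda>z. - int z) (rev zs) @ map int (butlast vs)
          @ [if even r then int (last vs) else - int (last vs)]) ! (i - (k - r))"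
        using f1 l unfolding og_word_def by (simp add: nth_append)
      also have "\<dots> = - int (rev zs ! (i - (k - r)))" using ir l by (simp add: nth_append)
      also have "\<dots> = - int (zs ! (k - 1 - i))" using True f1 l by (simp add: rev_nth)
      finally show ?thesis using True f1 by simp
    next
      case f2: False
      have ir: "\<not> i - (k - r) < r" "i - (k - r) - r = i - k" using f1 f2 l by arith+
      have "og_word r ys zs vs ! i = (map (\<lambda>z. - int z) (rev zs) @ map int (butlast vs)
          @ [if even r then int (last vs) else - int (last vs)]) ! (i - (k - r))"
        using f1 l unfolding og_word_def by (simp add: nth_append)
      also have "\<dots> = (map int (butlast vs)
          @ [if even r then int (last vs) else - int (last vs)]) ! (i - k)"
        using ir l by (simp only: nth_append length_map length_rev) simp
      also have "\<dots> = (if i < n - 1 then int (vs ! (i - k)) else if even r then int (vs ! (n - k - 1)) else - int (vs ! (n - k - 1)))"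
        using f2 i lb last l by (auto simp: nth_append nth_butlast)
      finally show ?thesis using f1 f2 by simp
    qed
  qed
qed

lemma signed_perm_og_word:
  assumes l: "length ys = k - r" "length zs = r" "length vs = n - k" "r \<le> k" "k < n"
    and dist: "distinct (ys @ zs @ vs)" and set: "set (ys @ zs @ vs) = {1..n}"
  shows "signed_perm n (og_word r ys zs vs)"
proof -
  let ?w = "og_word r ys zs vs"
  define u where "u = ys @ rev zs @ vs"
  have du: "distinct u" using dist unfolding u_def by auto
  have lu: "length u = n" using l unfolding u_def by simp
  have su: "set u = {1..n}" using set unfolding u_def by auto
  have urange: "\<And>i. i < n \<Longrightarrow> u ! i \<in> {1..n}" using su lu nth_mem by blast
  have unth: "\<And>i. i < n \<Longrightarrow> u ! i = (if i < k - r then ys ! i else if i < k then zs ! (k - 1 - i) else vs ! (i - k))"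
    using l unfolding u_def by (auto simp: nth_append rev_nth)
  have "wval ?w p = int (u ! (p - 1)) \<or> wval ?w p = - int (u ! (p - 1))" if "1 \<le> p" "p \<le> n" for p
    using that l unfolding wval_def by (cases "p = n") (auto simp add: og_word_nth[OF l] unth)
  then have abs_eq: "\<And>p. 1 \<le> p \<Longrightarrow> p \<le> n \<Longrightarrow> nat \<bar>wval ?w p\<bar> = u ! (p - 1)"
    by fastforce
  show ?thesis unfolding signed_perm_def
  proof
    show "\<forall>p\<in>{1..n}. wval ?w p \<noteq> 0 \<and> nat \<bar>wval ?w p\<bar> \<in> {1..n}"
    proof
      fix p assume "p \<in> {1..n}"
      then have "nat \<bar>wval ?w p\<bar> \<in> {1..n}" using abs_eq urange by auto
      then show "wval ?w p \<noteq> 0 \<and> nat \<bar>wval ?w p\<bar> \<in> {1..n}" by auto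
    qed
    show "inj_on (\<lambda>p. nat \<bar>wval ?w p\<bar>) {1..n}"
    proof (rule inj_onI)
      fix p q assume pq: "p \<in> {1..n}" "q \<in> {1..n}" "nat \<bar>wval ?w p\<bar> = nat \<bar>wval ?w q\<bar>"
      then have "u ! (p - 1) = u ! (q - 1)" using abs_eq by auto
      then have "p - 1 = q - 1" using du lu pq nth_eq_iff_index_eq by fastforce
      then show "p = q" using pq by auto
    qed
  qed
qed

lemma og_shape_og_word:
  assumes l: "length ys = k - r" "length zs = r" "length vs = n - k" "r \<le> k" "k < n"
    and s: "sorted_wrt (<) ys" "sorted_wrt (<) zs" "sorted_wrt (<) vs"
    and ms: "mset (ys @ zs @ vs) = mset [1..<n + 1]"
  shows "og_shape k n r (og_word r ys zs vs)"
proof -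
  let ?w = "og_word r ys zs vs"
  have dist0: "distinct (ys @ zs @ vs)" using ms by (metis distinct_upt mset_eq_imp_distinct_iff)
  have set0: "set (ys @ zs @ vs) = {1..n}" using ms
    by (metis atLeastLessThanSuc_atLeastAtMost mset_eq_setD set_upt Suc_eq_plus1)
  have w_signed_perm: "signed_perm n ?w" by (rule signed_perm_og_word[OF l dist0 set0])
  have pos: "\<And>x. x \<in> set (ys @ zs @ vs) \<Longrightarrow> 1 \<le> x" using set0 by auto
  have ys1: "\<And>i. i < k - r \<Longrightarrow> ys ! i \<ge> 1" using pos l(1) by (metis Un_iff nth_mem set_append)
  have zs1: "\<And>i. i < r \<Longrightarrow> zs ! i \<ge> 1" using pos l(2) by (metis Un_iff nth_mem set_append)
  have vs1: "\<And>i. i < n - k \<Longrightarrow> vs ! i \<ge> 1" using pos l(3) by (metis Un_iff nth_mem set_append)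
  have sgf: "\<And>p. 1 \<le> p \<Longrightarrow> p \<le> n \<Longrightarrow> wval ?w p = (if p \<le> k - r then int (ys ! (p - 1)) else if p \<le> k then - int (zs ! (k - p))
      else if p < n then int (vs ! (p - 1 - k)) else if even r then int (vs ! (n - k - 1)) else - int (vs ! (n - k - 1)))"
    unfolding wval_def using l by (subst og_word_nth[OF l]) auto
  show ?thesis unfolding og_shape_def
  proof (intro conjI allI impI)
    show "r \<le> k" "length ?w = n" "signed_perm n ?w" using l w_signed_perm og_word_length by auto
  next
    fix p assume "1 \<le> p \<and> p \<le> k - r" then have "p - 1 < k - r" "1 \<le> p" "p \<le> n" "p \<le> k - r" using l by arith+
    then show "wval ?w p > 0" using sgf[of p] ys1[of "p - 1"] l by auto
  next
    fix p assume "k - r < p \<and> p \<le> k" then have "k - p < r" "1 \<le> p" "p \<le> n" "\<not> p \<le> k - r" "p \<le> k" using l by arith+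
    then show "wval ?w p < 0" using sgf[of p] zs1[of "k - p"] l by auto
  next
    fix p assume "k < p \<and> p < n" then have "p - 1 - k < n - k" "1 \<le> p" "p \<le> n" "k < p" "p < n" using l by arith+
    then show "wval ?w p > 0" using sgf[of p] vs1[of "p - 1 - k"] l by auto
  next
    have "n - k - 1 < n - k" "1 \<le> n" using l by arith+
    then have "vs ! (n - k - 1) \<ge> 1" using vs1 by blast
    then show "(wval ?w n > 0) \<longleftrightarrow> even r" using sgf[of n] l by auto
  next
    fix p q assume "1 \<le> p \<and> p < q \<and> q \<le> k - r"
    then show "wval ?w p < wval ?w q" using sgf l sorted_wrt_nth_less[OF s(1), of "p - 1" "q - 1"] by auto
  next
    fix p q assume a: "k - r < p \<and> p < q \<and> q \<le> k"
    then have "zs ! (k - q) < zs ! (k - p)" using l sorted_wrt_nth_less[OF s(2), of "k - q" "k - p"] by auto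
    then show "wval ?w p < wval ?w q" using sgf a l by auto
  next
    fix p q assume a: "k < p \<and> p < q \<and> q \<le> n"
    have "vs ! (p - 1 - k) < vs ! (q - 1 - k)" using a l sorted_wrt_nth_less[OF s(3), of "p - 1 - k" "q - 1 - k"] by auto
    then show "\<bar>wval ?w p\<bar> < \<bar>wval ?w q\<bar>" using sgf a l by auto
  qed
qed

lemma W_OG_og_shape:
  assumes "k < n" "w \<in> W_OG k n"
  shows "\<exists>r. og_shape k n r w"
proof -
  from assms(2) obtain r ys zs vs where
    l: "r \<le> k" "length ys = k - r" "length zs = r" "length vs = n - k"
    and s: "sorted_wrt (<) ys" "sorted_wrt (<) zs" "sorted_wrt (<) vs"
    and ms: "mset (ys @ zs @ vs) = mset [1..<n + 1]"
    and w: "w = og_word r ys zs vs"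
    unfolding W_OG_def og_word_def by blast
  show ?thesis using og_shape_og_word[OF l(2,3,4,1) assms(1) s ms] w by blast
qed

section \<open>Comparable roots in the base and top regions\<close>

lemma root_le_rm_left_mono:
  assumes "1 \<le> c" "c \<le> a" "a < d" "d \<le> n"
  shows "root_le n (rm a d) (rm c d)"
  using assms by (subst root_le_iff_prefix_sums) (auto intro!: pair_vec_rm simp: prefix_sum_rm' rm_apply)

lemma root_le_rp_left_mono:
  assumes "1 \<le> c" "c \<le> a" "a < d" "d \<le> n"
  shows "root_le n (rp a d) (rp c d)"
  using assms by (subst root_le_iff_prefix_sums) (auto intro!: pair_vec_rp simp: prefix_sum_rp' rp_apply)

lemma root_le_rm_right_mono:
  assumes "1 \<le> c" "c < d" "d < d'" "d' \<le> n"
  shows "root_le n (rm c d) (rm c d')"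
  using assms by (subst root_le_iff_prefix_sums) (auto intro!: pair_vec_rm simp: prefix_sum_rm' rm_apply)

lemma root_le_rp_right_antimono:
  assumes "1 \<le> c" "c < d" "d < d'" "d' \<le> n"
  shows "root_le n (rp c d') (rp c d)"
  using assms by (subst root_le_iff_prefix_sums) (auto intro!: pair_vec_rp simp: prefix_sum_rp' rp_apply)

lemma root_le_rm_rp:
  assumes "1 \<le> c" "c < d" "c < d'" "d \<le> n" "d' \<le> n" "d < n \<or> d' < n"
  shows "root_le n (rm c d) (rp c d')"
  using assms
  by (subst root_le_iff_prefix_sums) (auto intro!: pair_vec_rm pair_vec_rp simp: prefix_sum_rm' prefix_sum_rp' rp_apply rm_apply)

lemma root_le_topI:
  assumes "1 \<le> a" "a \<le> a'" "b \<le> b'" "a' < b'" "a < b" "b' \<le> n"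
  shows "root_le n (rp a' b') (rp a b)"
  using assms by (subst root_le_iff_prefix_sums) (auto intro!: pair_vec_rp simp: prefix_sum_rp' rp_apply)

context
  fixes k n :: nat
  assumes kn: "1 \<le> k" "k < n"
begin

lemma two_le_n: "2 \<le> n" using kn by auto

lemma root_le_base_rm_rmD:
  assumes a: "1 \<le> a" "a \<le> k" "1 \<le> c" "c \<le> k" "k < d" "d \<le> n" "k < e" "e \<le> n"
    and le: "root_le n (rm a d) (rm c e)"
  shows "c \<le> a \<and> d \<le> e"
proof -
  have r: "pair_vec n (rm a d)" "pair_vec n (rm c e)" using a kn by (auto intro!: pair_vec_rm)
  have h: "\<forall>p. 1 \<le> p \<and> p \<le> n - 2 \<longrightarrow> prefix_sum (rm a d) p \<le> prefix_sum (rm c e) p"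
    "prefix_sum (rm a d) (n - 1) - rm a d n \<le> prefix_sum (rm c e) (n - 1) - rm c e n"
    using le root_le_iff_prefix_sums[OF two_le_n r] by auto
  have "c \<le> a"
  proof (cases "a \<le> n - 2")
    case True then show ?thesis using h(1)[rule_format, of a] a by (auto simp: prefix_sum_rm' split: if_splits)
  next
    case False then show ?thesis using a kn by auto
  qed
  moreover have "d \<le> e"
  proof (cases "d \<le> n - 1")
    case True
    then have "d - 1 \<le> n - 2" "1 \<le> d - 1" using a kn by auto
    then show ?thesis using h(1)[rule_format, of "d - 1"] a True h(2) by (auto simp: prefix_sum_rm' rm_apply split: if_splits)
  next
    case False then have "d = n" using a by auto
    then show ?thesis using h(2) a kn by (auto simp: prefix_sum_rm' rm_apply split: if_splits)
  qed
  ultimately show ?thesis by simp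
qed

lemma root_le_base_rp_rpD:
  assumes a: "1 \<le> a" "a \<le> k" "1 \<le> c" "c \<le> k" "k < d" "d \<le> n" "k < e" "e \<le> n"
    and le: "root_le n (rp a d) (rp c e)"
  shows "c \<le> a \<and> e \<le> d"
proof -
  have r: "pair_vec n (rp a d)" "pair_vec n (rp c e)" using a kn by (auto intro!: pair_vec_rp)
  have h: "\<forall>p. 1 \<le> p \<and> p \<le> n - 2 \<longrightarrow> prefix_sum (rp a d) p \<le> prefix_sum (rp c e) p"
    "prefix_sum (rp a d) (n - 1) - rp a d n \<le> prefix_sum (rp c e) (n - 1) - rp c e n"
    using le root_le_iff_prefix_sums[OF two_le_n r] by auto
  have "c \<le> a"
  proof (cases "a \<le> n - 2")
    case True then show ?thesis using h(1)[rule_format, of a] a by (auto simp: prefix_sum_rp' split: if_splits)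
  next
    case False then show ?thesis using a kn by auto
  qed
  moreover have "e \<le> d"
  proof (cases "d \<le> n - 2")
    case True
    then show ?thesis using h(1)[rule_format, of "d"] a True by (auto simp: prefix_sum_rp' split: if_splits)
  next
    case False
    then have "d = n - 1 \<or> d = n" using a by auto
    then show ?thesis
    proof
      assume "d = n - 1"
      then show ?thesis using h(2) a kn by (auto simp: prefix_sum_rp' rp_apply split: if_splits)
    qed (use a in auto)
  qed
  ultimately show ?thesis by simp
qed

lemma not_root_le_base_rp_rm:
  assumes a: "1 \<le> a" "a \<le> k" "1 \<le> c" "c \<le> k" "k < d" "d \<le> n" "k < e" "e \<le> n"
  shows "\<not> root_le n (rp a d) (rm c e)"
proof
  assume le: "root_le n (rp a d) (rm c e)"
  have r: "pair_vec n (rp a d)" "pair_vec n (rm c e)" using a kn by (auto intro!: pair_vec_rp pair_vec_rm)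
  have "prefix_sum (rp a d) (n - 1) + rp a d n \<le> prefix_sum (rm c e) (n - 1) + rm c e n"
    using le root_le_iff_prefix_sums[OF two_le_n r] by auto
  then show False using a kn by (auto simp: prefix_sum_rp' prefix_sum_rm' rp_apply rm_apply split: if_splits)
qed

lemma root_le_base_rm_rpD:
  assumes a: "1 \<le> a" "a \<le> k" "1 \<le> c" "c \<le> k" "k < d" "d \<le> n" "k < e" "e \<le> n"
    and le: "root_le n (rm a d) (rp c e)"
  shows "c \<le> a \<and> (d = n \<longrightarrow> e < n)"
proof -
  have r: "pair_vec n (rm a d)" "pair_vec n (rp c e)" using a kn by (auto intro!: pair_vec_rp pair_vec_rm)
  have h: "\<forall>p. 1 \<le> p \<and> p \<le> n - 2 \<longrightarrow> prefix_sum (rm a d) p \<le> prefix_sum (rp c e) p"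
    "prefix_sum (rm a d) (n - 1) - rm a d n \<le> prefix_sum (rp c e) (n - 1) - rp c e n"
    using le root_le_iff_prefix_sums[OF two_le_n r] by auto
  have "c \<le> a"
  proof (cases "a \<le> n - 2")
    case True then show ?thesis using h(1)[rule_format, of a] a by (auto simp: prefix_sum_rm' prefix_sum_rp' split: if_splits)
  next
    case False then show ?thesis using a kn by auto
  qed
  moreover have "d = n \<longrightarrow> e < n"
    using h(2) a kn by (auto simp: prefix_sum_rp' prefix_sum_rm' rp_apply rm_apply split: if_splits)
  ultimately show ?thesis by simp
qed

lemma root_le_topD:
  assumes a: "1 \<le> a" "a < b" "b \<le> k" "1 \<le> c" "c < e" "e \<le> k"
    and le: "root_le n (rp a b) (rp c e)"
  shows "c \<le> a \<and> e \<le> b"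
proof -
  have r: "pair_vec n (rp a b)" "pair_vec n (rp c e)" using a kn by (auto intro!: pair_vec_rp)
  have h: "\<forall>p. 1 \<le> p \<and> p \<le> n - 2 \<longrightarrow> prefix_sum (rp a b) p \<le> prefix_sum (rp c e) p"
    using le root_le_iff_prefix_sums[OF two_le_n r] by auto
  have "a \<le> n - 2" using a kn by auto
  then have "c \<le> a"
    using h[rule_format, of a] a kn by (auto simp: prefix_sum_rp' split: if_splits)
  moreover have "e \<le> b"
  proof (cases "b \<le> n - 2")
    case True then show ?thesis using h[rule_format, of b] a by (auto simp: prefix_sum_rp' split: if_splits)
  next
    case False then show ?thesis using a kn by auto
  qed
  ultimately show ?thesis by simp
qed

end


lemma diamond_eq: "1 \<le> c \<Longrightarrow> c \<le> k \<Longrightarrow>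
  diamond k n (k + 1 - c) = {rm c b | b. k < b \<and> b \<le> n} \<union> {rp c b | b. k < b \<and> b \<le> n}"
  unfolding diamond_def by auto

lemma Int_diamond_eq: "1 \<le> c \<Longrightarrow> c \<le> k \<Longrightarrow>
  S \<inter> diamond k n (k + 1 - c) = (\<lambda>d. rm c d) ` {d\<in>{k<..n}. rm c d \<in> S} \<union> (\<lambda>d. rp c d) ` {d\<in>{k<..n}. rp c d \<in> S}"
  by (subst diamond_eq) auto

lemma card_Int_diamond:
  assumes "1 \<le> c" "c \<le> k"
  shows "card (S \<inter> diamond k n (k + 1 - c)) = card {d\<in>{k<..n}. rm c d \<in> S} + card {d\<in>{k<..n}. rp c d \<in> S}"
proof -
  define A where "A = {d\<in>{k<..n}. rm c d \<in> S}"
  define B where "B = {d\<in>{k<..n}. rp c d \<in> S}"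
  have i1: "inj_on (\<lambda>d. rm c d) A"
    by (rule inj_onI) (use assms in \<open>auto simp: rm_eq_iff A_def\<close>)
  have i2: "inj_on (\<lambda>d. rp c d) B"
    by (rule inj_onI) (use assms in \<open>auto simp: rp_eq_iff B_def\<close>)
  have dj: "(\<lambda>d. rm c d) ` A \<inter> (\<lambda>d. rp c d) ` B = {}"
    using assms by (auto simp: rm_neq_rp A_def B_def)
  have fA: "finite A" "finite B" unfolding A_def B_def by auto
  have "card (S \<inter> diamond k n (k + 1 - c)) = card ((\<lambda>d. rm c d) ` A \<union> (\<lambda>d. rp c d) ` B)"
    unfolding Int_diamond_eq[OF assms] A_def B_def ..
  also have "\<dots> = card ((\<lambda>d. rm c d) ` A) + card ((\<lambda>d. rp c d) ` B)"
    by (rule card_Un_disjoint) (use dj fA in auto)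
  also have "\<dots> = card A + card B" using card_image[OF i1] card_image[OF i2] by simp
  finally show ?thesis unfolding A_def B_def .
qed

lemma card_Int_two_diamonds:
  assumes "1 \<le> a" "a \<le> k" "1 \<le> b" "b \<le> k" "a \<noteq> b"
  shows "card (S \<inter> (diamond k n (k + 1 - a) \<union> diamond k n (k + 1 - b))) =
         card (S \<inter> diamond k n (k + 1 - a)) + card (S \<inter> diamond k n (k + 1 - b))"
proof -
  have f: "finite (diamond k n (k + 1 - c))" for c unfolding diamond_def by auto
  have dj: "(S \<inter> diamond k n (k + 1 - a)) \<inter> (S \<inter> diamond k n (k + 1 - b)) = {}"
    using assms unfolding diamond_eq[OF assms(1,2)] diamond_eq[OF assms(3,4)]
    by (auto simp: rm_eq_iff rp_eq_iff rm_neq_rp rm_neq_rp[symmetric])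
  have "S \<inter> (diamond k n (k + 1 - a) \<union> diamond k n (k + 1 - b)) =
        (S \<inter> diamond k n (k + 1 - a)) \<union> (S \<inter> diamond k n (k + 1 - b))" by auto
  then show ?thesis using card_Un_disjoint[OF _ _ dj] f by simp
qed

lemma lam2_eq:
  assumes "1 \<le> c" "c \<le> k"
  shows "lam2 k S (k + 1 - c) = card {a\<in>{1..<c}. rp a c \<in> S}"
proof -
  have e: "{\<beta> \<in> S. \<exists>a. 1 \<le> a \<and> a < k + 1 - (k + 1 - c) \<and> \<beta> = rp a (k + 1 - (k + 1 - c))}
        = (\<lambda>a. rp a c) ` {a\<in>{1..<c}. rp a c \<in> S}" using assms by auto
  have i: "inj_on (\<lambda>a. rp a c) {a\<in>{1..<c}. rp a c \<in> S}"
    by (rule inj_onI) (auto simp: rp_eq_iff)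
  show ?thesis unfolding lam2_def e card_image[OF i] ..
qed

section \<open>Inversion sets lie in $\Theta(k,2n)$\<close>

locale og_perm =
  fixes k n r :: nat and w :: "int list"
  assumes kn: "1 \<le> k" "k < n" and wp: "og_shape k n r w"
begin

abbreviation "s \<equiv> wval w"

lemma w_signed_perm: "signed_perm n w" using wp unfolding og_shape_def by auto
lemma r_le_k: "r \<le> k" using wp unfolding og_shape_def by auto

lemma wval_nonzero: "1 \<le> p \<Longrightarrow> p \<le> n \<Longrightarrow> s p \<noteq> 0" using w_signed_perm unfolding signed_perm_def by auto
lemma wval_abs_range: "1 \<le> p \<Longrightarrow> p \<le> n \<Longrightarrow> nat \<bar>s p\<bar> \<in> {1..n}" using w_signed_perm unfolding signed_perm_def by auto
lemma wval_abs_inj: "1 \<le> p \<Longrightarrow> p \<le> n \<Longrightarrow> 1 \<le> q \<Longrightarrow> q \<le> n \<Longrightarrow> p \<noteq> q \<Longrightarrow> \<bar>s p\<bar> \<noteq> \<bar>s q\<bar>"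
  using w_signed_perm unfolding signed_perm_def inj_on_def by (metis atLeastAtMost_iff)

lemma wval_top_pos_iff: "1 \<le> p \<Longrightarrow> p \<le> k \<Longrightarrow> s p > 0 \<longleftrightarrow> p \<le> k - r"
  using wp unfolding og_shape_def by (metis not_le not_less_iff_gr_or_eq)
lemma wval_low_pos: "k < p \<Longrightarrow> p < n \<Longrightarrow> s p > 0"
  using wp unfolding og_shape_def by auto
lemma wval_n_pos_iff: "s n > 0 \<longleftrightarrow> even r"
  using wp unfolding og_shape_def by auto

lemma wval_top_mono:
  assumes "1 \<le> p" "p \<le> q" "q \<le> k"
  shows "(s q > 0 \<longrightarrow> s p > 0 \<and> s p \<le> s q) \<and> (s p < 0 \<longrightarrow> s q < 0 \<and> \<bar>s q\<bar> \<le> \<bar>s p\<bar>)"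
proof (cases "p = q")
  case True then show ?thesis by auto
next
  case False
  then have pq: "p < q" using assms by auto
  have m1: "\<forall>p q. 1 \<le> p \<and> p < q \<and> q \<le> k - r \<longrightarrow> s p < s q"
   and m2: "\<forall>p q. k - r < p \<and> p < q \<and> q \<le> k \<longrightarrow> s p < s q"
    using wp unfolding og_shape_def by auto
  have "s p \<noteq> 0" "s q \<noteq> 0" using wval_nonzero assms kn by auto
  then show ?thesis using wval_top_pos_iff[of p] wval_top_pos_iff[of q] assms pq m1[rule_format, of p q] m2[rule_format, of p q]
    by auto
qed

lemma wval_low_abs_mono:
  assumes "k < p" "p \<le> q" "q \<le> n"
  shows "\<bar>s p\<bar> \<le> \<bar>s q\<bar>"
proof -
  have "\<forall>p q. k < p \<and> p < q \<and> q \<le> n \<longrightarrow> \<bar>s p\<bar> < \<bar>s q\<bar>" using wp unfolding og_shape_def by auto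
  then show ?thesis using assms by (cases "p = q") (auto, meson le_less less_le_trans)
qed

abbreviation "S \<equiv> Inv n w"

lemma top_rm_notin_Inv: "1 \<le> a \<Longrightarrow> a < b \<Longrightarrow> b \<le> k \<Longrightarrow> rm a b \<notin> S"
  using rm_in_Inv_iff[OF w_signed_perm, of a b] wval_top_mono[of a b] wval_nonzero[of a] wval_nonzero[of b] kn wval_abs_inj[of a b] by fastforce

lemma top_rp_in_Inv_iff: "1 \<le> a \<Longrightarrow> a < b \<Longrightarrow> b \<le> k \<Longrightarrow> rp a b \<in> S \<longleftrightarrow> s b < 0 \<and> (s a < 0 \<or> \<bar>s b\<bar> < s a)"
  using rp_in_Inv_iff[OF w_signed_perm, of a b] wval_top_mono[of a b] wval_nonzero[of a] wval_nonzero[of b] kn by auto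

lemma base_rm_in_Inv_iff: "1 \<le> a \<Longrightarrow> a \<le> k \<Longrightarrow> k < d \<Longrightarrow> d \<le> n \<Longrightarrow>
   rm a d \<in> S \<longleftrightarrow> (s a > 0 \<and> s d > 0 \<and> \<bar>s d\<bar> < s a) \<or> (s a < 0 \<and> (s d > 0 \<or> \<bar>s a\<bar> < \<bar>s d\<bar>))"
  using rm_in_Inv_iff[OF w_signed_perm, of a d] wval_nonzero[of a] wval_nonzero[of d] kn by auto

lemma base_rp_in_Inv_iff: "1 \<le> a \<Longrightarrow> a \<le> k \<Longrightarrow> k < d \<Longrightarrow> d \<le> n \<Longrightarrow>
   rp a d \<in> S \<longleftrightarrow> (s a > 0 \<and> s d < 0 \<and> \<bar>s d\<bar> < s a) \<or> (s a < 0 \<and> (s d < 0 \<or> \<bar>s a\<bar> < \<bar>s d\<bar>))"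
  using rp_in_Inv_iff[OF w_signed_perm, of a d] wval_nonzero[of a] wval_nonzero[of d] kn by auto

lemma low_rm_notin_Inv: "k < a \<Longrightarrow> a < b \<Longrightarrow> b \<le> n \<Longrightarrow> rm a b \<notin> S"
proof
  assume a: "k < a" "a < b" "b \<le> n" "rm a b \<in> S"
  have "s a > 0" using wval_low_pos a by auto
  moreover have "\<bar>s a\<bar> < \<bar>s b\<bar>" using wval_low_abs_mono[of a b] wval_abs_inj[of a b] a kn by fastforce
  ultimately show False using a rm_in_Inv_iff[OF w_signed_perm, of a b] kn by auto
qed

lemma low_rp_notin_Inv: "k < a \<Longrightarrow> a < b \<Longrightarrow> b \<le> n \<Longrightarrow> rp a b \<notin> S"
proof
  assume a: "k < a" "a < b" "b \<le> n" "rp a b \<in> S"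
  have "s a > 0" using wval_low_pos a by auto
  moreover have "\<bar>s a\<bar> < \<bar>s b\<bar>" using wval_low_abs_mono[of a b] wval_abs_inj[of a b] a kn by fastforce
  ultimately show False using a rp_in_Inv_iff[OF w_signed_perm, of a b] kn by auto
qed

lemma Inv_subset_regions: "S \<subseteq> base_region k n \<union> top_region k"
proof
  fix \<beta> assume b: "\<beta> \<in> S"
  then have "\<beta> \<in> pos_roots n" using Inv_subset_pos_roots by auto
  then obtain a b where ab: "1 \<le> a" "a < b" "b \<le> n" "\<beta> = rm a b \<or> \<beta> = rp a b"
    unfolding pos_roots_def by blast
  consider "b \<le> k" | "a \<le> k" "k < b" | "k < a" by linarith
  then show "\<beta> \<in> base_region k n \<union> top_region k"
  proof cases
    case 1 then show ?thesis using ab b top_rm_notin_Inv[of a b] unfolding top_region_def by auto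
  next
    case 2 then show ?thesis using ab unfolding base_region_def by auto
  next
    case 3 then show ?thesis using ab b low_rm_notin_Inv[of a b] low_rp_notin_Inv[of a b] by auto
  qed
qed


lemma wval_low_neg_imp_n: "k < e \<Longrightarrow> e \<le> n \<Longrightarrow> s e < 0 \<Longrightarrow> e = n"
  using wval_low_pos[of e] by force

lemma card_diamond_parts_pos:
  assumes c: "1 \<le> c" "c \<le> k" "s c > 0"
  shows "card {d\<in>{k<..n}. rm c d \<in> S} + card {d\<in>{k<..n}. rp c d \<in> S} = card {d\<in>{k<..n}. \<bar>s d\<bar> < s c}"
proof -
  have A: "{d\<in>{k<..n}. rm c d \<in> S} = {d\<in>{k<..n}. s d > 0 \<and> \<bar>s d\<bar> < s c}"
    using base_rm_in_Inv_iff c by auto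
  have B: "{d\<in>{k<..n}. rp c d \<in> S} = {d\<in>{k<..n}. s d < 0 \<and> \<bar>s d\<bar> < s c}"
    using base_rp_in_Inv_iff c by auto
  have U: "{d\<in>{k<..n}. \<bar>s d\<bar> < s c} = {d\<in>{k<..n}. s d > 0 \<and> \<bar>s d\<bar> < s c} \<union> {d\<in>{k<..n}. s d < 0 \<and> \<bar>s d\<bar> < s c}"
  proof (rule set_eqI)
    fix d show "d \<in> {d\<in>{k<..n}. \<bar>s d\<bar> < s c} \<longleftrightarrow> d \<in> {d\<in>{k<..n}. s d > 0 \<and> \<bar>s d\<bar> < s c} \<union> {d\<in>{k<..n}. s d < 0 \<and> \<bar>s d\<bar> < s c}"
      using wval_nonzero[of d] kn by (cases "s d > 0") auto
  qed
  show ?thesis unfolding A B U by (subst card_Un_disjoint) auto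
qed

lemma card_diamond_parts_neg:
  assumes c: "1 \<le> c" "c \<le> k" "s c < 0"
  shows "card {d\<in>{k<..n}. rm c d \<in> S} + card {d\<in>{k<..n}. rp c d \<in> S} = (n - k) + card {d\<in>{k<..n}. \<bar>s c\<bar> < \<bar>s d\<bar>}"
proof -
  define A where "A = {d\<in>{k<..n}. rm c d \<in> S}"
  define B where "B = {d\<in>{k<..n}. rp c d \<in> S}"
  have A': "A = {d\<in>{k<..n}. s d > 0 \<or> \<bar>s c\<bar> < \<bar>s d\<bar>}"
    using base_rm_in_Inv_iff c unfolding A_def by auto
  have B': "B = {d\<in>{k<..n}. s d < 0 \<or> \<bar>s c\<bar> < \<bar>s d\<bar>}"
    using base_rp_in_Inv_iff c unfolding B_def by auto
  have U: "A \<union> B = {k<..n}" unfolding A' B'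
  proof (rule set_eqI)
    fix d show "d \<in> {d\<in>{k<..n}. s d > 0 \<or> \<bar>s c\<bar> < \<bar>s d\<bar>} \<union> {d\<in>{k<..n}. s d < 0 \<or> \<bar>s c\<bar> < \<bar>s d\<bar>} \<longleftrightarrow> d \<in> {k<..n}"
      using wval_nonzero[of d] kn by (cases "s d > 0") auto
  qed
  have I: "A \<inter> B = {d\<in>{k<..n}. \<bar>s c\<bar> < \<bar>s d\<bar>}" unfolding A' B' by auto
  have "card A + card B = card (A \<union> B) + card (A \<inter> B)"
    by (rule card_Un_Int) (auto simp: A_def B_def)
  also have "\<dots> = (n - k) + card {d\<in>{k<..n}. \<bar>s c\<bar> < \<bar>s d\<bar>}" unfolding U I by simp
  finally show ?thesis unfolding A_def B_def .
qed

lemma Inv_rm_rm_down: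
  assumes i: "1 \<le> c" "c \<le> a" "a \<le> k" "k < d" "d \<le> e" "e \<le> n" and b: "rm c e \<in> S"
  shows "rm a d \<in> S"
proof -
  have m1: "(s a > 0 \<longrightarrow> s c > 0 \<and> s c \<le> s a) \<and> (s c < 0 \<longrightarrow> s a < 0 \<and> \<bar>s a\<bar> \<le> \<bar>s c\<bar>)"
    using wval_top_mono[of c a] i by auto
  have m2: "\<bar>s d\<bar> \<le> \<bar>s e\<bar>" using wval_low_abs_mono[of d e] i by auto
  have nz: "s a \<noteq> 0" "s c \<noteq> 0" "s d \<noteq> 0" "s e \<noteq> 0" using wval_nonzero i kn by auto
  have v: "s d < 0 \<Longrightarrow> d = n" "s e < 0 \<Longrightarrow> e = n" using wval_low_neg_imp_n i by auto
  have bb: "(s c > 0 \<and> s e > 0 \<and> \<bar>s e\<bar> < s c) \<or> (s c < 0 \<and> (s e > 0 \<or> \<bar>s c\<bar> < \<bar>s e\<bar>))"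
    using b base_rm_in_Inv_iff[of c e] i by auto
  have "(s a > 0 \<and> s d > 0 \<and> \<bar>s d\<bar> < s a) \<or> (s a < 0 \<and> (s d > 0 \<or> \<bar>s a\<bar> < \<bar>s d\<bar>))"
  proof (cases "d = n")
    case True then have "e = n" using i by auto
    then show ?thesis using True m1 m2 nz bb by (cases "s a > 0") auto
  next
    case False then have "s d > 0" using v nz by force
    then show ?thesis using m1 m2 nz bb by (cases "s a > 0") auto
  qed
  then show ?thesis using base_rm_in_Inv_iff[of a d] i by auto
qed

lemma Inv_rp_rp_down:
  assumes i: "1 \<le> c" "c \<le> a" "a \<le> k" "k < e" "e \<le> d" "d \<le> n" and b: "rp c e \<in> S"
  shows "rp a d \<in> S"
proof -
  have m1: "(s a > 0 \<longrightarrow> s c > 0 \<and> s c \<le> s a) \<and> (s c < 0 \<longrightarrow> s a < 0 \<and> \<bar>s a\<bar> \<le> \<bar>s c\<bar>)"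
    using wval_top_mono[of c a] i by auto
  have m2: "\<bar>s e\<bar> \<le> \<bar>s d\<bar>" using wval_low_abs_mono[of e d] i by auto
  have nz: "s a \<noteq> 0" "s c \<noteq> 0" "s d \<noteq> 0" "s e \<noteq> 0" using wval_nonzero i kn by auto
  have v: "s e < 0 \<Longrightarrow> e = n" using wval_low_neg_imp_n i by auto
  have bb: "(s c > 0 \<and> s e < 0 \<and> \<bar>s e\<bar> < s c) \<or> (s c < 0 \<and> (s e < 0 \<or> \<bar>s c\<bar> < \<bar>s e\<bar>))"
    using b base_rp_in_Inv_iff[of c e] i by auto
  have "(s a > 0 \<and> s d < 0 \<and> \<bar>s d\<bar> < s a) \<or> (s a < 0 \<and> (s d < 0 \<or> \<bar>s a\<bar> < \<bar>s d\<bar>))"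
  proof (cases "s e < 0")
    case True then have "e = n" "d = n" using v i by auto
    then show ?thesis using True m1 m2 nz bb by (cases "s a > 0") auto
  next
    case False
    then show ?thesis using m1 m2 nz bb by (cases "s a > 0") auto
  qed
  then show ?thesis using base_rp_in_Inv_iff[of a d] i by auto
qed

lemma Inv_rm_rp_down:
  assumes i: "1 \<le> c" "c \<le> a" "a \<le> k" "k < e" "k < d" "d \<le> n" "e \<le> n" "d = n \<longrightarrow> e < n"
    and b: "rp c e \<in> S"
  shows "rm a d \<in> S"
proof -
  have m1: "(s a > 0 \<longrightarrow> s c > 0 \<and> s c \<le> s a) \<and> (s c < 0 \<longrightarrow> s a < 0 \<and> \<bar>s a\<bar> \<le> \<bar>s c\<bar>)"
    using wval_top_mono[of c a] i by auto
  have nz: "s a \<noteq> 0" "s c \<noteq> 0" "s d \<noteq> 0" "s e \<noteq> 0" using wval_nonzero i kn by auto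
  have v: "s e < 0 \<Longrightarrow> e = n" "s d < 0 \<Longrightarrow> d = n" using wval_low_neg_imp_n i by auto
  have bb: "(s c > 0 \<and> s e < 0 \<and> \<bar>s e\<bar> < s c) \<or> (s c < 0 \<and> (s e < 0 \<or> \<bar>s c\<bar> < \<bar>s e\<bar>))"
    using b base_rp_in_Inv_iff[of c e] i by auto
  have "(s a > 0 \<and> s d > 0 \<and> \<bar>s d\<bar> < s a) \<or> (s a < 0 \<and> (s d > 0 \<or> \<bar>s a\<bar> < \<bar>s d\<bar>))"
  proof (cases "d = n")
    case True
    then have "e < n" using i by auto
    then have "s e > 0" using v nz by force
    moreover have "\<bar>s e\<bar> \<le> \<bar>s d\<bar>" using wval_low_abs_mono[of e d] i \<open>e < n\<close> True by auto
    ultimately show ?thesis using m1 nz bb by (cases "s a > 0") auto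
  next
    case False then have "s d > 0" using v nz by force
    show ?thesis
    proof (cases "s a > 0")
      case True
      then have "s c > 0" "s c \<le> s a" using m1 by auto
      then have "s e < 0" "\<bar>s e\<bar> < s c" using bb by auto
      then have "e = n" using v by auto
      then have "\<bar>s d\<bar> \<le> \<bar>s e\<bar>" using wval_low_abs_mono[of d e] i by auto
      then show ?thesis using True \<open>s d > 0\<close> \<open>\<bar>s e\<bar> < s c\<close> \<open>s c \<le> s a\<close> by auto
    next
      case False then show ?thesis using \<open>s d > 0\<close> nz by auto
    qed
  qed
  then show ?thesis using base_rm_in_Inv_iff[of a d] i by auto
qed

lemma Inv_top_down:
  assumes i: "1 \<le> c" "c \<le> a" "a < b" "e \<le> b" "b \<le> k" "c < e" and bb: "rp c e \<in> S"
  shows "rp a b \<in> S"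
proof -
  have m1: "(s a > 0 \<longrightarrow> s c > 0 \<and> s c \<le> s a) \<and> (s c < 0 \<longrightarrow> s a < 0 \<and> \<bar>s a\<bar> \<le> \<bar>s c\<bar>)"
    using wval_top_mono[of c a] i by auto
  have m2: "(s b > 0 \<longrightarrow> s e > 0 \<and> s e \<le> s b) \<and> (s e < 0 \<longrightarrow> s b < 0 \<and> \<bar>s b\<bar> \<le> \<bar>s e\<bar>)"
    using wval_top_mono[of e b] i by auto
  have nz: "s a \<noteq> 0" "s c \<noteq> 0" using wval_nonzero i kn by auto
  have "s e < 0 \<and> (s c < 0 \<or> \<bar>s e\<bar> < s c)" using bb top_rp_in_Inv_iff[of c e] i by auto
  then have "s b < 0 \<and> (s a < 0 \<or> \<bar>s b\<bar> < s a)" using m1 m2 nz by (cases "s a > 0") auto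
  then show ?thesis using top_rp_in_Inv_iff[of a b] i by auto
qed


lemma Inv_base_lower_ideal: "lower_ideal_in n (base_region k n) (S \<inter> base_region k n)"
  unfolding lower_ideal_in_def
proof (intro conjI ballI impI)
  show "S \<inter> base_region k n \<subseteq> base_region k n" by auto
next
  fix \<beta> \<alpha> assume b: "\<beta> \<in> S \<inter> base_region k n" and a: "\<alpha> \<in> base_region k n" and le: "root_le n \<alpha> \<beta>"
  from b obtain c e where ce: "1 \<le> c" "c \<le> k" "k < e" "e \<le> n" "\<beta> = rm c e \<or> \<beta> = rp c e"
    unfolding base_region_def by blast
  from a obtain a' d where ad: "1 \<le> a'" "a' \<le> k" "k < d" "d \<le> n" "\<alpha> = rm a' d \<or> \<alpha> = rp a' d"
    unfolding base_region_def by blast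
  have "\<alpha> \<in> S"
  proof (cases "\<alpha> = rm a' d")
    case True
    note aT = True
    show ?thesis
    proof (cases "\<beta> = rm c e")
      case True
      then have "c \<le> a' \<and> d \<le> e" using root_le_base_rm_rmD[OF kn ad(1,2) ce(1,2) ad(3,4) ce(3,4)] le aT by simp
      then show ?thesis using Inv_rm_rm_down[of c a' d e] ad ce b True aT by auto
    next
      case False
      then have bp: "\<beta> = rp c e" using ce by auto
      then have "c \<le> a' \<and> (d = n \<longrightarrow> e < n)" using root_le_base_rm_rpD[OF kn ad(1,2) ce(1,2) ad(3,4) ce(3,4)] le aT by simp
      then show ?thesis using Inv_rm_rp_down[of c a' e d] ad ce b bp aT by auto
    qed
  next
    case False
    then have aP: "\<alpha> = rp a' d" using ad by auto
    show ?thesis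
    proof (cases "\<beta> = rm c e")
      case True
      then show ?thesis using not_root_le_base_rp_rm[OF kn ad(1,2) ce(1,2) ad(3,4) ce(3,4)] le aP by simp
    next
      case False
      then have bp: "\<beta> = rp c e" using ce by auto
      then have "c \<le> a' \<and> e \<le> d" using root_le_base_rp_rpD[OF kn ad(1,2) ce(1,2) ad(3,4) ce(3,4)] le aP by simp
      then show ?thesis using Inv_rp_rp_down[of c a' e d] ad ce b bp aP by auto
    qed
  qed
  then show "\<alpha> \<in> S \<inter> base_region k n" using a by auto
qed

lemma Inv_top_lower_ideal: "lower_ideal_in n (top_region k) (S \<inter> top_region k)"
  unfolding lower_ideal_in_def
proof (intro conjI ballI impI)
  show "S \<inter> top_region k \<subseteq> top_region k" by auto
next
  fix \<beta> \<alpha> assume b: "\<beta> \<in> S \<inter> top_region k" and a: "\<alpha> \<in> top_region k" and le: "root_le n \<alpha> \<beta>"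
  from b obtain c e where ce: "1 \<le> c" "c < e" "e \<le> k" "\<beta> = rp c e"
    unfolding top_region_def by blast
  from a obtain a' d where ad: "1 \<le> a'" "a' < d" "d \<le> k" "\<alpha> = rp a' d"
    unfolding top_region_def by blast
  have "c \<le> a' \<and> e \<le> d" using root_le_topD[OF kn ad(1-3) ce(1-3)] le ad ce by simp
  then have "\<alpha> \<in> S" using Inv_top_down[of c a' d e] ad ce b by auto
  then show "\<alpha> \<in> S \<inter> top_region k" using a by auto
qed

lemma card_Int_diamond_le_if_pos: "1 \<le> c \<Longrightarrow> c \<le> k \<Longrightarrow> s c > 0 \<Longrightarrow> card (S \<inter> diamond k n (k + 1 - c)) \<le> n - k"
proof -
  assume c: "1 \<le> c" "c \<le> k" "s c > 0"
  have "card (S \<inter> diamond k n (k + 1 - c)) = card {d\<in>{k<..n}. \<bar>s d\<bar> < s c}"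
    using card_Int_diamond[OF c(1,2)] card_diamond_parts_pos[OF c] by simp
  also have "\<dots> \<le> card {k<..n}" by (rule card_mono) auto
  finally show ?thesis by simp
qed

lemma card_Int_diamond_ge_if_neg: "1 \<le> c \<Longrightarrow> c \<le> k \<Longrightarrow> s c < 0 \<Longrightarrow> card (S \<inter> diamond k n (k + 1 - c)) \<ge> n - k"
proof -
  assume c: "1 \<le> c" "c \<le> k" "s c < 0"
  show ?thesis using card_Int_diamond[OF c(1,2)] card_diamond_parts_neg[OF c] by simp
qed

lemma Inv_top_mixed_sign_threshold:
  assumes ab: "1 \<le> a" "a < b" "b \<le> k" and sgn: "s a > 0" "s b < 0"
  shows "(rp a b \<in> S \<longrightarrow> 2 * (n - k) \<le> card (S \<inter> diamond k n (k + 1 - a)) + card (S \<inter> diamond k n (k + 1 - b))) \<and>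
    (rp a b \<notin> S \<longrightarrow> card (S \<inter> diamond k n (k + 1 - a)) + card (S \<inter> diamond k n (k + 1 - b)) \<le> 2 * (n - k))"
proof -
  define X where "X = {d\<in>{k<..n}. \<bar>s d\<bar> < s a}"
  define Y where "Y = {d\<in>{k<..n}. \<bar>s b\<bar> < \<bar>s d\<bar>}"
  have La: "card (S \<inter> diamond k n (k + 1 - a)) = card X"
    using card_Int_diamond[where c = a and S = S] card_diamond_parts_pos[of a] ab sgn unfolding X_def by auto
  have Lb: "card (S \<inter> diamond k n (k + 1 - b)) = (n - k) + card Y"
    using card_Int_diamond[where c = b and S = S] card_diamond_parts_neg[of b] ab sgn unfolding Y_def by auto
  have fin: "finite X" "finite Y" unfolding X_def Y_def by auto
  have ne: "\<bar>s a\<bar> \<noteq> \<bar>s b\<bar>" using wval_abs_inj[of a b] ab kn by auto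
  show ?thesis
  proof (cases "\<bar>s b\<bar> < s a")
    case True
    then have "rp a b \<in> S" using top_rp_in_Inv_iff ab sgn by auto
    moreover have "X \<union> Y = {k<..n}"
    proof (rule set_eqI)
      fix d show "d \<in> X \<union> Y \<longleftrightarrow> d \<in> {k<..n}"
        using wval_abs_inj[of d b] ab kn True unfolding X_def Y_def by auto
    qed
    then have "card X + card Y \<ge> n - k" using card_Un_le[of X Y] by simp
    ultimately show ?thesis unfolding La Lb by auto
  next
    case False
    then have lt: "s a < \<bar>s b\<bar>" using ne sgn by auto
    then have "rp a b \<notin> S" using top_rp_in_Inv_iff ab sgn by auto
    moreover have "X \<inter> Y = {}" using lt unfolding X_def Y_def by auto
    then have "card X + card Y = card (X \<union> Y)" using card_Un_disjoint[OF fin] by simp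
    moreover have "X \<union> Y \<subseteq> {k<..n}" unfolding X_def Y_def by auto
    then have "card (X \<union> Y) \<le> n - k" using card_mono[of "{k<..n}" "X \<union> Y"] by auto
    ultimately show ?thesis unfolding La Lb by auto
  qed
qed

lemma Inv_top_threshold:
  assumes ab: "1 \<le> a" "a < b" "b \<le> k"
  shows "(card (S \<inter> (diamond k n (k + 1 - a) \<union> diamond k n (k + 1 - b))) > 2 * n - 2 * k \<longrightarrow> rp a b \<in> S) \<and>
         (card (S \<inter> (diamond k n (k + 1 - a) \<union> diamond k n (k + 1 - b))) < 2 * n - 2 * k \<longrightarrow> rp a b \<notin> S)"
proof -
  let ?La = "card (S \<inter> diamond k n (k + 1 - a))" and ?Lb = "card (S \<inter> diamond k n (k + 1 - b))"
  have C: "card (S \<inter> (diamond k n (k + 1 - a) \<union> diamond k n (k + 1 - b))) = ?La + ?Lb"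
    using card_Int_two_diamonds[where a = a and b = b and S = S] ab by auto
  have m: "(s b > 0 \<longrightarrow> s a > 0 \<and> s a \<le> s b) \<and> (s a < 0 \<longrightarrow> s b < 0 \<and> \<bar>s b\<bar> \<le> \<bar>s a\<bar>)"
    using wval_top_mono[of a b] ab by auto
  have nz: "s a \<noteq> 0" "s b \<noteq> 0" using wval_nonzero ab kn by auto
  consider "s a > 0" "s b > 0" | "s a < 0" "s b < 0" | "s a > 0" "s b < 0" using m nz by linarith
  then show ?thesis
  proof cases
    case 1
    then have "rp a b \<notin> S" using top_rp_in_Inv_iff ab by auto
    moreover have "?La \<le> n - k" "?Lb \<le> n - k" using card_Int_diamond_le_if_pos 1 ab by auto
    ultimately show ?thesis unfolding C by auto
  next
    case 2
    then have "rp a b \<in> S" using top_rp_in_Inv_iff ab by auto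
    moreover have "?La \<ge> n - k" "?Lb \<ge> n - k" using card_Int_diamond_ge_if_neg 2 ab by auto
    ultimately show ?thesis unfolding C by auto
  next
    case 3
    then show ?thesis using Inv_top_mixed_sign_threshold[OF ab 3] unfolding C by auto
  qed
qed

lemma Inv_in_Theta: "S \<in> Theta k n"
  unfolding Theta_def using Inv_subset_regions Inv_base_lower_ideal Inv_top_lower_ideal Inv_top_threshold by blast

end

lemma Y_OG_subset_Theta:
  assumes kn: "1 \<le> k" "k < n"
  shows "Y_OG k n \<subseteq> Theta k n"
proof
  fix S assume "S \<in> Y_OG k n"
  then obtain w where w: "w \<in> W_OG k n" "S = Inv n w" unfolding Y_OG_def by auto
  then obtain r where "og_shape k n r w" using W_OG_og_shape kn by blast
  then interpret og_perm k n r w using kn by unfold_locales auto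
  show "S \<in> Theta k n" using Inv_in_Theta w by simp
qed

section \<open>Diamonds and columns of the members of $\Theta(k,2n)$\<close>

definition minus_part :: "nat \<Rightarrow> nat \<Rightarrow> (nat \<Rightarrow> int) set \<Rightarrow> nat \<Rightarrow> nat set" where
  "minus_part k n S c = {d\<in>{k<..n}. rm c d \<in> S}"
definition plus_part :: "nat \<Rightarrow> nat \<Rightarrow> (nat \<Rightarrow> int) set \<Rightarrow> nat \<Rightarrow> nat set" where
  "plus_part k n S c = {d\<in>{k<..n}. rp c d \<in> S}"
definition top_col :: "(nat \<Rightarrow> int) set \<Rightarrow> nat \<Rightarrow> nat set" where
  "top_col S c = {a\<in>{1..<c}. rp a c \<in> S}"
text \<open>Columns are indexed by the top-region coordinate $c$, i.e.\ by $i = k + 1 - c$ in the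
  notation of the statement: \<open>dcard k n S c\<close> is $\lambda^{(1)}_i$, \<open>card (top_col S c)\<close> is
  $\lambda^{(2)}_i$ and \<open>gamma_at k n S c\<close> is the $i$-th part of $F_k(S)$.\<close>

definition dcard :: "nat \<Rightarrow> nat \<Rightarrow> (nat \<Rightarrow> int) set \<Rightarrow> nat \<Rightarrow> nat" where
  "dcard k n S c = card (S \<inter> diamond k n (k + 1 - c))"
definition gamma_at :: "nat \<Rightarrow> nat \<Rightarrow> (nat \<Rightarrow> int) set \<Rightarrow> nat \<Rightarrow> nat" where
  "gamma_at k n S c = dcard k n S c + card (top_col S c)"

lemma initial_segment_eq:
  assumes fin: "finite A" and sub: "A \<subseteq> {k<..}" and cl: "\<And>x y. x \<in> A \<Longrightarrow> k < y \<Longrightarrow> y < x \<Longrightarrow> y \<in> A"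
  shows "A = {k<..k + card A}"
proof (cases "A = {}")
  case True then show ?thesis by simp
next
  case False
  define x where "x = Max A"
  have xA: "x \<in> A" using fin False unfolding x_def by simp
  have "A = {k<..x}"
  proof
    show "A \<subseteq> {k<..x}" using sub fin unfolding x_def by auto
    show "{k<..x} \<subseteq> A" using cl xA by (auto simp: le_less)
  qed
  moreover have "x > k" using xA sub by auto
  ultimately show ?thesis by simp
qed

lemma final_segment_eq:
  assumes sub: "A \<subseteq> {k<..n}" and cl: "\<And>x y. x \<in> A \<Longrightarrow> x < y \<Longrightarrow> y \<le> n \<Longrightarrow> y \<in> A"
  shows "A = {n - card A<..n}"
proof (cases "A = {}")
  case True then show ?thesis by simp
next
  case False
  have fin: "finite A" using finite_subset[OF sub] by simp
  define x where "x = Min A"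
  have xA: "x \<in> A" using fin False unfolding x_def by simp
  have "A = {x..n}"
  proof
    show "A \<subseteq> {x..n}" using sub fin unfolding x_def by auto
    show "{x..n} \<subseteq> A" using cl xA by (auto simp: le_less)
  qed
  moreover have "x > k" "x \<le> n" using xA sub by auto
  ultimately show ?thesis by (auto simp: Suc_diff_le)
qed

lemma lower_ideal_inD: "lower_ideal_in n R I \<Longrightarrow> \<beta> \<in> I \<Longrightarrow> \<alpha> \<in> R \<Longrightarrow> root_le n \<alpha> \<beta> \<Longrightarrow> \<alpha> \<in> I"
  unfolding lower_ideal_in_def by blast

locale theta_elem =
  fixes k n :: nat and S :: "(nat \<Rightarrow> int) set"
  assumes kn: "1 \<le> k" "k < n" and ST: "S \<in> Theta k n"
begin

abbreviation "m \<equiv> n - k"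
abbreviation "M \<equiv> minus_part k n S"
abbreviation "P \<equiv> plus_part k n S"
abbreviation "L \<equiv> dcard k n S"

lemma S_subset_regions: "S \<subseteq> base_region k n \<union> top_region k" using ST unfolding Theta_def by auto
lemma base_lower_ideal: "lower_ideal_in n (base_region k n) (S \<inter> base_region k n)" using ST unfolding Theta_def by auto
lemma top_lower_ideal: "lower_ideal_in n (top_region k) (S \<inter> top_region k)" using ST unfolding Theta_def by auto
lemma threshold_card: "1 \<le> a \<Longrightarrow> a < b \<Longrightarrow> b \<le> k \<Longrightarrow>
         (card (S \<inter> (diamond k n (k + 1 - a) \<union> diamond k n (k + 1 - b))) > 2 * n - 2 * k \<longrightarrow> rp a b \<in> S) \<and>
         (card (S \<inter> (diamond k n (k + 1 - a) \<union> diamond k n (k + 1 - b))) < 2 * n - 2 * k \<longrightarrow> rp a b \<notin> S)"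
  using ST unfolding Theta_def by auto

lemma threshold_dcard: "1 \<le> a \<Longrightarrow> a < b \<Longrightarrow> b \<le> k \<Longrightarrow>
    (L a + L b > 2 * m \<longrightarrow> rp a b \<in> S) \<and> (L a + L b < 2 * m \<longrightarrow> rp a b \<notin> S)"
  using threshold_card[of a b] card_Int_two_diamonds[where a = a and b = b and S = S] unfolding dcard_def by auto

lemma rm_in_base_region: "1 \<le> c \<Longrightarrow> c \<le> k \<Longrightarrow> k < d \<Longrightarrow> d \<le> n \<Longrightarrow> rm c d \<in> base_region k n"
  unfolding base_region_def by blast
lemma rp_in_base_region: "1 \<le> c \<Longrightarrow> c \<le> k \<Longrightarrow> k < d \<Longrightarrow> d \<le> n \<Longrightarrow> rp c d \<in> base_region k n"
  unfolding base_region_def by blast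

lemma dcard_eq_card_parts: "1 \<le> c \<Longrightarrow> c \<le> k \<Longrightarrow> L c = card (M c) + card (P c)"
  unfolding dcard_def minus_part_def plus_part_def by (rule card_Int_diamond)

lemma finite_minus_part: "finite (M c)" and finite_plus_part: "finite (P c)" unfolding minus_part_def plus_part_def by auto
lemma minus_part_subset: "M c \<subseteq> {k<..n}" and plus_part_subset: "P c \<subseteq> {k<..n}" unfolding minus_part_def plus_part_def by auto
lemma card_minus_part_le: "card (M c) \<le> m" using card_mono[OF _ minus_part_subset] by fastforce
lemma card_plus_part_le: "card (P c) \<le> m" using card_mono[OF _ plus_part_subset] by fastforce

lemma minus_part_down_closed: "1 \<le> c \<Longrightarrow> c \<le> k \<Longrightarrow> d \<in> M c \<Longrightarrow> k < d' \<Longrightarrow> d' < d \<Longrightarrow> d' \<in> M c"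
  unfolding minus_part_def using lower_ideal_inD[OF base_lower_ideal, of "rm c d" "rm c d'"] root_le_rm_right_mono[of c d' d] rm_in_base_region[of c d] rm_in_base_region[of c d']
  by auto

lemma plus_part_up_closed: "1 \<le> c \<Longrightarrow> c \<le> k \<Longrightarrow> d \<in> P c \<Longrightarrow> d < d' \<Longrightarrow> d' \<le> n \<Longrightarrow> d' \<in> P c"
  unfolding plus_part_def using lower_ideal_inD[OF base_lower_ideal, of "rp c d" "rp c d'"] root_le_rp_right_antimono[of c d d'] rp_in_base_region[of c d] rp_in_base_region[of c d']
  by auto

lemma plus_part_imp_minus_part: "1 \<le> c \<Longrightarrow> c \<le> k \<Longrightarrow> d \<in> P c \<Longrightarrow> k < d' \<Longrightarrow> d' \<le> n \<Longrightarrow> d' < n \<or> d < n \<Longrightarrow> d' \<in> M c"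
  unfolding plus_part_def minus_part_def using lower_ideal_inD[OF base_lower_ideal, of "rp c d" "rm c d'"] root_le_rm_rp[of c d' d] rp_in_base_region[of c d] rm_in_base_region[of c d']
  by auto

lemma minus_part_mono: "1 \<le> c \<Longrightarrow> c \<le> a \<Longrightarrow> a \<le> k \<Longrightarrow> M c \<subseteq> M a"
  unfolding minus_part_def using lower_ideal_inD[OF base_lower_ideal] root_le_rm_left_mono rm_in_base_region by fastforce
lemma plus_part_mono: "1 \<le> c \<Longrightarrow> c \<le> a \<Longrightarrow> a \<le> k \<Longrightarrow> P c \<subseteq> P a"
  unfolding plus_part_def using lower_ideal_inD[OF base_lower_ideal] root_le_rp_left_mono rp_in_base_region by fastforce

lemma minus_part_eq_interval: "1 \<le> c \<Longrightarrow> c \<le> k \<Longrightarrow> M c = {k<..k + card (M c)}"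
proof (rule initial_segment_eq[OF finite_minus_part])
  show "M c \<subseteq> {k<..}" using minus_part_subset[of c] by auto
qed (use minus_part_down_closed in auto)
lemma plus_part_eq_interval: "1 \<le> c \<Longrightarrow> c \<le> k \<Longrightarrow> P c = {n - card (P c)<..n}"
  by (rule final_segment_eq[OF plus_part_subset]) (use plus_part_up_closed in auto)

lemma n_in_minus_part_iff: "1 \<le> c \<Longrightarrow> c \<le> k \<Longrightarrow> n \<in> M c \<longleftrightarrow> card (M c) = m"
proof -
  assume c: "1 \<le> c" "c \<le> k"
  have "n \<in> M c \<longleftrightarrow> n \<in> {k<..k + card (M c)}" using minus_part_eq_interval[OF c] by simp
  then show ?thesis using card_minus_part_le[of c] kn by auto
qed

lemma n_in_plus_part_iff: "1 \<le> c \<Longrightarrow> c \<le> k \<Longrightarrow> n \<in> P c \<longleftrightarrow> card (P c) \<ge> 1"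
proof -
  assume c: "1 \<le> c" "c \<le> k"
  have "n \<in> P c \<longleftrightarrow> n \<in> {n - card (P c)<..n}" using plus_part_eq_interval[OF c] by simp
  then show ?thesis using card_plus_part_le[of c] kn by auto
qed

lemma card_minus_part_if_plus: "1 \<le> c \<Longrightarrow> c \<le> k \<Longrightarrow> card (P c) \<ge> 1 \<Longrightarrow> card (M c) \<ge> m - 1"
proof -
  assume c: "1 \<le> c" "c \<le> k" and p: "card (P c) \<ge> 1"
  then have "n \<in> P c" using n_in_plus_part_iff by auto
  then have "{k<..<n} \<subseteq> M c" using plus_part_imp_minus_part[OF c, of n] by auto
  then have "card {k<..<n} \<le> card (M c)" using card_mono[OF finite_minus_part] by blast
  then show ?thesis by simp
qed

lemma card_minus_part_if_two_plus: "1 \<le> c \<Longrightarrow> c \<le> k \<Longrightarrow> card (P c) \<ge> 2 \<Longrightarrow> card (M c) = m"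
proof -
  assume c: "1 \<le> c" "c \<le> k" and p: "card (P c) \<ge> 2"
  have "n - 1 \<in> P c" using plus_part_eq_interval[OF c] p kn card_plus_part_le[of c] by auto
  then have "n \<in> M c" using plus_part_imp_minus_part[OF c, of "n - 1" n] kn by auto
  then show ?thesis using n_in_minus_part_iff[OF c] by simp
qed

lemma dcard_le: "1 \<le> c \<Longrightarrow> c \<le> k \<Longrightarrow> L c \<le> 2 * m"
  using dcard_eq_card_parts[of c] card_minus_part_le[of c] card_plus_part_le[of c] by auto

lemma dcard_mono: "1 \<le> c \<Longrightarrow> c \<le> a \<Longrightarrow> a \<le> k \<Longrightarrow> L c \<le> L a"
proof -
  assume a: "1 \<le> c" "c \<le> a" "a \<le> k"
  have "card (M c) \<le> card (M a)" "card (P c) \<le> card (P a)"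
    using card_mono[OF finite_minus_part minus_part_mono[OF a]] card_mono[OF finite_plus_part plus_part_mono[OF a]] by auto
  then show ?thesis using dcard_eq_card_parts a by auto
qed

lemma n_in_minus_part_iff_notin_plus_part: "1 \<le> c \<Longrightarrow> c \<le> k \<Longrightarrow> L c = m \<Longrightarrow> (n \<in> M c \<longleftrightarrow> n \<notin> P c)"
proof -
  assume c: "1 \<le> c" "c \<le> k" and L: "L c = m"
  have s: "card (M c) + card (P c) = m" using L dcard_eq_card_parts[OF c] by simp
  show ?thesis using n_in_minus_part_iff[OF c] n_in_plus_part_iff[OF c] card_minus_part_if_plus[OF c] card_minus_part_if_two_plus[OF c] s kn by linarith
qed

lemma n_in_minus_part_shift: "1 \<le> c \<Longrightarrow> c \<le> a \<Longrightarrow> a \<le> k \<Longrightarrow> L c = m \<Longrightarrow> L a = m \<Longrightarrow> (n \<in> M c \<longleftrightarrow> n \<in> M a)"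
proof -
  assume a: "1 \<le> c" "c \<le> a" "a \<le> k" and L: "L c = m" "L a = m"
  show ?thesis
  proof
    assume "n \<in> M c" then show "n \<in> M a" using minus_part_mono[OF a] by auto
  next
    assume "n \<in> M a"
    show "n \<in> M c"
    proof (rule ccontr)
      assume "n \<notin> M c"
      then have "n \<in> P c" using n_in_minus_part_iff_notin_plus_part[of c] a L by auto
      then have "n \<in> P a" using plus_part_mono[OF a] by auto
      then show False using n_in_minus_part_iff_notin_plus_part[of a] a L \<open>n \<in> M a\<close> by auto
    qed
  qed
qed

lemma top_col_subset: "top_col S c \<subseteq> {1..<c}" unfolding top_col_def by auto
lemma finite_top_col: "finite (top_col S c)" using finite_subset[OF top_col_subset] by simp
lemma card_top_col_le: "card (top_col S c) \<le> c - 1" using card_mono[OF _ top_col_subset] by fastforce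

lemma top_rp_mono: "1 \<le> a \<Longrightarrow> a \<le> a' \<Longrightarrow> c \<le> c' \<Longrightarrow> a' < c' \<Longrightarrow> a < c \<Longrightarrow> c' \<le> k \<Longrightarrow> rp a c \<in> S \<Longrightarrow> rp a' c' \<in> S"
proof -
  assume a: "1 \<le> a" "a \<le> a'" "c \<le> c'" "a' < c'" "a < c" "c' \<le> k" "rp a c \<in> S"
  have "c \<le> k" using a by auto
  then have "rp a c \<in> S \<inter> top_region k" using a unfolding top_region_def by blast
  moreover have "1 \<le> a'" using a by auto
  then have "rp a' c' \<in> top_region k" using a unfolding top_region_def by blast
  moreover have "root_le n (rp a' c') (rp a c)" using root_le_topI[of a a' c c' n] a kn by auto
  ultimately show ?thesis using lower_ideal_inD[OF top_lower_ideal] by blast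
qed

lemma top_col_up_closed: "a \<in> top_col S c \<Longrightarrow> a \<le> a' \<Longrightarrow> a' < c \<Longrightarrow> c \<le> k \<Longrightarrow> a' \<in> top_col S c"
  unfolding top_col_def using top_rp_mono[of a a' c c] by auto

lemma top_col_mono: "2 \<le> c \<Longrightarrow> c \<le> k \<Longrightarrow> top_col S (c - 1) \<subseteq> top_col S c"
  unfolding top_col_def using top_rp_mono[of _ _ "c - 1" c] by auto

lemma top_col_empty: "1 \<le> c \<Longrightarrow> c \<le> k \<Longrightarrow> L c < m \<Longrightarrow> top_col S c = {}"
proof -
  assume c: "1 \<le> c" "c \<le> k" "L c < m"
  { fix a assume a: "a \<in> top_col S c"
    then have "1 \<le> a" "a < c" unfolding top_col_def by auto
    then have "L a \<le> L c" using dcard_mono c by auto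
    then have "rp a c \<notin> S" using threshold_dcard[of a c] c \<open>1 \<le> a\<close> \<open>a < c\<close> by auto
    then have False using a unfolding top_col_def by auto }
  then show ?thesis by auto
qed

lemma gamma_at_mono: "2 \<le> c \<Longrightarrow> c \<le> k \<Longrightarrow> gamma_at k n S (c - 1) \<le> gamma_at k n S c"
  unfolding gamma_at_def using dcard_mono[of "c - 1" c] card_mono[OF finite_top_col top_col_mono] by fastforce

lemma gamma_at_strict_mono: "2 \<le> c \<Longrightarrow> c \<le> k \<Longrightarrow> gamma_at k n S c > m \<Longrightarrow> gamma_at k n S (c - 1) < gamma_at k n S c"
proof -
  assume c: "2 \<le> c" "c \<le> k" and g: "gamma_at k n S c > m"
  have Lm: "L (c - 1) \<le> L c" using dcard_mono[of "c - 1" c] c by auto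
  have cm: "top_col S (c - 1) \<subseteq> top_col S c" using top_col_mono c by auto
  have c1: "c - 1 \<notin> top_col S (c - 1)" unfolding top_col_def by auto
  have key: "rp (c - 1) c \<in> S \<Longrightarrow> card (top_col S (c - 1)) < card (top_col S c)"
  proof -
    assume "rp (c - 1) c \<in> S"
    then have "c - 1 \<in> top_col S c" using c unfolding top_col_def by auto
    then have "insert (c - 1) (top_col S (c - 1)) \<subseteq> top_col S c" using cm by auto
    then have "card (insert (c - 1) (top_col S (c - 1))) \<le> card (top_col S c)" using card_mono[OF finite_top_col] by blast
    then show ?thesis using c1 finite_top_col by simp
  qed
  show ?thesis
  proof (cases "L (c - 1) < L c")
    case True then show ?thesis unfolding gamma_at_def using card_mono[OF finite_top_col cm] by linarith
  next
    case False
    then have eq: "L (c - 1) = L c" using Lm by auto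
    consider "L c > m" | "L c < m" | "L c = m" by linarith
    then show ?thesis
    proof cases
      case 1
      then have "rp (c - 1) c \<in> S" using threshold_dcard[of "c - 1" c] c eq by auto
      then show ?thesis using key eq unfolding gamma_at_def by linarith
    next
      case 2
      then have "top_col S c = {}" using top_col_empty c by auto
      then show ?thesis using g 2 unfolding gamma_at_def by simp
    next
      case 3
      then have "top_col S c \<noteq> {}" using g unfolding gamma_at_def by auto
      then obtain a where "a \<in> top_col S c" by auto
      then have "c - 1 \<in> top_col S c" using top_col_up_closed[of a c "c - 1"] c unfolding top_col_def by auto
      then have "rp (c - 1) c \<in> S" unfolding top_col_def by auto
      then show ?thesis using key eq unfolding gamma_at_def by linarith
    qed
  qed
qed

lemma gamma_at_le: "1 \<le> c \<Longrightarrow> c \<le> k \<Longrightarrow> gamma_at k n S c \<le> 2 * n - 1 - k"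
  unfolding gamma_at_def using dcard_le[of c] card_top_col_le[of c] kn by linarith

lemma dcard_eq_m_if_gamma_at_eq_m: "1 \<le> c \<Longrightarrow> c \<le> k \<Longrightarrow> gamma_at k n S c = m \<Longrightarrow> L c = m"
proof -
  assume c: "1 \<le> c" "c \<le> k" and g: "gamma_at k n S c = m"
  show "L c = m"
  proof (rule ccontr)
    assume "L c \<noteq> m"
    then consider "L c < m" | "L c > m" by linarith
    then show False
    proof cases
      case 1 then have "top_col S c = {}" using top_col_empty c by auto
      then show False using g 1 unfolding gamma_at_def by simp
    next
      case 2 then show False using g unfolding gamma_at_def by simp
    qed
  qed
qed

lemma ex_gamma_at_eq_m: "1 \<le> c \<Longrightarrow> c \<le> k \<Longrightarrow> L c = m \<Longrightarrow> \<exists>c'. 1 \<le> c' \<and> c' \<le> k \<and> gamma_at k n S c' = m"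
proof -
  assume c: "1 \<le> c" "c \<le> k" "L c = m"
  define c0 where "c0 = (LEAST c. 1 \<le> c \<and> c \<le> k \<and> L c = m)"
  have c0: "1 \<le> c0" "c0 \<le> k" "L c0 = m" using LeastI[of "\<lambda>c. 1 \<le> c \<and> c \<le> k \<and> L c = m" c] c unfolding c0_def by auto
  have "top_col S c0 = {}"
  proof (rule ccontr)
    assume "top_col S c0 \<noteq> {}"
    then obtain a where a: "a \<in> top_col S c0" by auto
    then have a1: "1 \<le> a" "a < c0" "rp a c0 \<in> S" unfolding top_col_def by auto
    have "L a \<le> m" using dcard_mono[of a c0] a1 c0 by auto
    moreover have "L a \<noteq> m"
    proof
      assume "L a = m"
      then have "c0 \<le> a" unfolding c0_def using a1 c0 by (intro Least_le) auto
      then show False using a1 by auto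
    qed
    ultimately have "L a + L c0 < 2 * m" using c0 by auto
    then show False using threshold_dcard[of a c0] a1 c0 by auto
  qed
  then show ?thesis using c0 unfolding gamma_at_def by auto
qed


end

lemma lam1_eq_dcard: "1 \<le> i \<Longrightarrow> i \<le> k \<Longrightarrow> lam1 k n S i = dcard k n S (k + 1 - i)"
  unfolding lam1_def dcard_def by simp

lemma F_fst_len: "length (fst (F k n S)) = k" unfolding F_def by simp

lemma F_fst_nth:
  assumes j: "j < k"
  shows "fst (F k n S) ! j = gamma_at k n S (k - j)"
proof -
  have "fst (F k n S) ! j = lam1 k n S (j + 1) + lam2 k S (j + 1)"
    unfolding F_def fst_conv using j by (subst nth_map) (auto simp del: upt_Suc)
  also have "lam1 k n S (j + 1) = dcard k n S (k - j)" using lam1_eq_dcard[of "j+1" k n S] j by simp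
  also have "lam2 k S (j + 1) = card (top_col S (k - j))"
    using lam2_eq[where c = "k - j" and k = k and S = S] j unfolding top_col_def by (simp add: Suc_diff_Suc)
  finally show ?thesis unfolding gamma_at_def .
qed

definition tag_col :: "nat \<Rightarrow> nat \<Rightarrow> (nat \<Rightarrow> int) set \<Rightarrow> nat" where
  "tag_col k n S = k + 1 - (LEAST i. 1 \<le> i \<and> i \<le> k \<and> lam1 k n S i = n - k)"

context theta_elem
begin

lemma ex_lam1_eq_m_iff: "(\<exists>i. 1 \<le> i \<and> i \<le> k \<and> lam1 k n S i = n - k) \<longleftrightarrow> (\<exists>c. 1 \<le> c \<and> c \<le> k \<and> L c = m)"
proof
  assume "\<exists>i. 1 \<le> i \<and> i \<le> k \<and> lam1 k n S i = n - k"
  then obtain i where "1 \<le> i" "i \<le> k" "lam1 k n S i = n - k" by auto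
  then show "\<exists>c. 1 \<le> c \<and> c \<le> k \<and> L c = m" using lam1_eq_dcard[of i k n S]
    by (intro exI[of _ "k + 1 - i"]) auto
next
  assume "\<exists>c. 1 \<le> c \<and> c \<le> k \<and> L c = m"
  then obtain c where "1 \<le> c" "c \<le> k" "L c = m" by auto
  then show "\<exists>i. 1 \<le> i \<and> i \<le> k \<and> lam1 k n S i = n - k" using lam1_eq_dcard[of "k + 1 - c" k n S]
    by (intro exI[of _ "k + 1 - c"]) auto
qed

lemma tag_col_props:
  assumes "\<exists>c. 1 \<le> c \<and> c \<le> k \<and> L c = m"
  shows "1 \<le> tag_col k n S \<and> tag_col k n S \<le> k \<and> L (tag_col k n S) = m"
proof -
  obtain i where i: "1 \<le> i" "i \<le> k" "lam1 k n S i = n - k" using assms ex_lam1_eq_m_iff by blast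
  define i0 where "i0 = (LEAST i. 1 \<le> i \<and> i \<le> k \<and> lam1 k n S i = n - k)"
  have "1 \<le> i0 \<and> i0 \<le> k \<and> lam1 k n S i0 = n - k"
    unfolding i0_def by (rule LeastI[of _ i]) (use i in auto)
  then show ?thesis unfolding tag_col_def i0_def[symmetric] using lam1_eq_dcard[of i0 k n S] by auto
qed

lemma F_tag_eq: "F_tag k n S = (if \<exists>c. 1 \<le> c \<and> c \<le> k \<and> L c = m then
     (if n \<in> M (tag_col k n S) then 1 else 2) else 0)"
proof (cases "\<exists>c. 1 \<le> c \<and> c \<le> k \<and> L c = m")
  case True
  define c0 where "c0 = tag_col k n S"
  have c0: "1 \<le> c0" "c0 \<le> k" "L c0 = m" using tag_col_props[OF True] unfolding c0_def by auto
  have ex: "\<exists>i. 1 \<le> i \<and> i \<le> k \<and> lam1 k n S i = n - k" using True ex_lam1_eq_m_iff by blast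
  have "F_tag k n S = (if rm c0 n \<in> S then 1 else if rp c0 n \<in> S then 2 else 0)"
    unfolding F_tag_def c0_def tag_col_def using ex by (simp add: Let_def)
  also have "\<dots> = (if n \<in> M c0 then 1 else 2)"
    using n_in_minus_part_iff_notin_plus_part[OF c0] kn unfolding minus_part_def plus_part_def by auto
  finally show ?thesis using True unfolding c0_def by simp
next
  case False
  then show ?thesis using ex_lam1_eq_m_iff unfolding F_tag_def by auto
qed

lemma n_in_minus_part_iff_F_tag:
  assumes c: "1 \<le> c" "c \<le> k" "L c = m"
  shows "n \<in> M c \<longleftrightarrow> F_tag k n S = 1"
proof -
  have ex: "\<exists>c. 1 \<le> c \<and> c \<le> k \<and> L c = m" using c by blast
  define c0 where "c0 = tag_col k n S"
  have c0: "1 \<le> c0" "c0 \<le> k" "L c0 = m" using tag_col_props[OF ex] unfolding c0_def by auto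
  have "n \<in> M c \<longleftrightarrow> n \<in> M c0"
  proof (cases "c \<le> c0")
    case True
    show ?thesis by (rule n_in_minus_part_shift[OF c(1) True c0(2) c(3) c0(3)])
  next
    case False
    then have "c0 \<le> c" by simp
    show ?thesis using n_in_minus_part_shift[OF c0(1) \<open>c0 \<le> c\<close> c(2) c0(3) c(3)] by simp
  qed
  moreover have "F_tag k n S = (if n \<in> M c0 then 1 else 2)" using F_tag_eq ex unfolding c0_def by simp
  ultimately show ?thesis by simp
qed

lemma F_in_Ptilde: "F k n S \<in> Ptilde k n"
proof -
  let ?g = "fst (F k n S)"
  have nth: "\<And>j. j < k \<Longrightarrow> ?g ! j = gamma_at k n S (k - j)" using F_fst_nth by auto
  have c1: "\<forall>i. i + 1 < k \<longrightarrow> ?g ! (i + 1) \<le> ?g ! i"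
  proof (intro allI impI)
    fix i assume i: "i + 1 < k"
    have "gamma_at k n S (k - i - 1) \<le> gamma_at k n S (k - i)" using gamma_at_mono[of "k - i"] i by auto
    moreover have "?g ! (i + 1) = gamma_at k n S (k - i - 1)" using nth[of "i + 1"] i by simp
    moreover have "?g ! i = gamma_at k n S (k - i)" using nth[of i] i by simp
    ultimately show "?g ! (i + 1) \<le> ?g ! i" by simp
  qed
  have c2: "\<forall>i<k. ?g ! i \<le> 2 * n - 1 - k" using nth gamma_at_le by auto
  have c3: "\<forall>i. i + 1 < k \<longrightarrow> ?g ! i > n - k \<longrightarrow> ?g ! i > ?g ! (i + 1)"
  proof (intro allI impI)
    fix i assume i: "i + 1 < k" and gt: "?g ! i > n - k"
    have "gamma_at k n S (k - i - 1) < gamma_at k n S (k - i)" using gamma_at_strict_mono[of "k - i"] i gt nth by auto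
    moreover have "?g ! (i + 1) = gamma_at k n S (k - i - 1)" using nth[of "i + 1"] i by simp
    moreover have "?g ! i = gamma_at k n S (k - i)" using nth[of i] i by simp
    ultimately show "?g ! i > ?g ! (i + 1)" by simp
  qed
  have mset: "n - k \<in> set ?g \<longleftrightarrow> (\<exists>c. 1 \<le> c \<and> c \<le> k \<and> L c = m)"
  proof
    assume "n - k \<in> set ?g"
    then obtain j where j: "j < k" "?g ! j = n - k" using F_fst_len[of k n S] by (auto simp: in_set_conv_nth)
    then have "gamma_at k n S (k - j) = m" using nth by auto
    then show "\<exists>c. 1 \<le> c \<and> c \<le> k \<and> L c = m" using dcard_eq_m_if_gamma_at_eq_m[of "k - j"] j by (intro exI[of _ "k - j"]) auto
  next
    assume "\<exists>c. 1 \<le> c \<and> c \<le> k \<and> L c = m"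
    then obtain c where "1 \<le> c" "c \<le> k" "L c = m" by auto
    then obtain c' where c': "1 \<le> c'" "c' \<le> k" "gamma_at k n S c' = m" using ex_gamma_at_eq_m by blast
    then have "?g ! (k - c') = m" using nth[of "k - c'"] by auto
    moreover have "k - c' < length ?g" using c' F_fst_len[of k n S] by auto
    ultimately show "n - k \<in> set ?g" by (metis nth_mem)
  qed
  have c4: "(if n - k \<in> set ?g then snd (F k n S) \<in> {1, 2} else snd (F k n S) = 0)"
    using mset F_tag_eq unfolding F_def by auto
  show ?thesis unfolding Ptilde_def using F_fst_len[of k n S] c1 c2 c3 c4
    by (cases "F k n S") auto
qed


end

section \<open>Injectivity of $F_k$ on $\Theta(k,2n)$\<close>

lemma upward_closed_eq:
  fixes A B :: "nat set"
  assumes A: "A \<subseteq> {1..<c}" "\<And>x y. x \<in> A \<Longrightarrow> x \<le> y \<Longrightarrow> y < c \<Longrightarrow> y \<in> A"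
    and B: "B \<subseteq> {1..<c}" "\<And>x y. x \<in> B \<Longrightarrow> x \<le> y \<Longrightarrow> y < c \<Longrightarrow> y \<in> B"
    and cd: "card A = card B"
  shows "A = B"
proof -
  have fA1: "finite A" using finite_subset[OF A(1)] by simp
  have fA2: "finite B" using finite_subset[OF B(1)] by simp
  note fA = fA1 fA2
  have "A \<subseteq> B \<or> B \<subseteq> A"
  proof (rule ccontr)
    assume "\<not> (A \<subseteq> B \<or> B \<subseteq> A)"
    then obtain x y where xy: "x \<in> A" "x \<notin> B" "y \<in> B" "y \<notin> A" by auto
    have "x < c" "y < c" using xy A(1) B(1) by auto
    show False
    proof (cases "x \<le> y")
      case True then show False using A(2)[OF xy(1) True \<open>y < c\<close>] xy by simp
    next
      case False then have "y \<le> x" by simp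
      then show False using B(2)[OF xy(3) _ \<open>x < c\<close>] xy by simp
    qed
  qed
  then show ?thesis using card_subset_eq fA cd by metis
qed

text \<open>Diamond counts are recovered column by column: if they differ first in column $c$ while
  $\gamma_c$ agrees, the columns differ in some root $e_a + e_c$, which the threshold conditions
  forbid because column $a < c$ has the same count in both sets.\<close>

lemma dcard_step:
  assumes T: "theta_elem k n S" "theta_elem k n S'" and c: "1 \<le> c" "c \<le> k"
    and prev: "\<And>a. 1 \<le> a \<Longrightarrow> a < c \<Longrightarrow> dcard k n S a = dcard k n S' a"
    and g: "gamma_at k n S c = gamma_at k n S' c" and lt: "dcard k n S c < dcard k n S' c"
  shows False
proof -
  interpret A: theta_elem k n S by (rule T(1))
  interpret B: theta_elem k n S' by (rule T(2))
  have "card (top_col S' c) < card (top_col S c)" using g lt unfolding gamma_at_def by linarith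
  moreover have "top_col S c \<subseteq> top_col S' c \<Longrightarrow> card (top_col S c) \<le> card (top_col S' c)"
    by (rule card_mono[OF B.finite_top_col])
  ultimately have "\<not> top_col S c \<subseteq> top_col S' c" by linarith
  then obtain a where a: "a \<in> top_col S c" "a \<notin> top_col S' c" by blast
  then have a1: "1 \<le> a" "a < c" "rp a c \<in> S" "rp a c \<notin> S'" unfolding top_col_def by auto
  have t1: "dcard k n S a + dcard k n S c < 2 * (n - k) \<longrightarrow> rp a c \<notin> S" using A.threshold_dcard[of a c] a1(1,2) c(2) by blast
  have t2: "dcard k n S' a + dcard k n S' c > 2 * (n - k) \<longrightarrow> rp a c \<in> S'" using B.threshold_dcard[of a c] a1(1,2) c(2) by blast
  have "\<not> (dcard k n S a + dcard k n S c < 2 * (n - k))" using t1 a1 by blast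
  moreover have "\<not> (dcard k n S' a + dcard k n S' c > 2 * (n - k))" using t2 a1 by blast
  ultimately show False using prev[of a] a1 lt by linarith
qed

lemma card_parts_unique:
  fixes m s t s' t' :: nat
  assumes "s + t = s' + t'" "s \<le> m" "s' \<le> m"
    and "1 \<le> t \<longrightarrow> m \<le> s + 1" "1 \<le> t' \<longrightarrow> m \<le> s' + 1"
    and "2 \<le> t \<longrightarrow> s = m" "2 \<le> t' \<longrightarrow> s' = m"
    and "s + t = m \<longrightarrow> (s = m \<longleftrightarrow> s' = m)"
  shows "s = s' \<and> t = t'"
  using assms by arith

locale theta_pair = A: theta_elem k n S + B: theta_elem k n S' for k n S S' +
  assumes F_eq: "F k n S = F k n S'"
begin

lemma gamma_at_eq: "1 \<le> c \<Longrightarrow> c \<le> k \<Longrightarrow> gamma_at k n S c = gamma_at k n S' c"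
  using arg_cong[OF F_eq, of "\<lambda>x. fst x ! (k - c)"] F_fst_nth[of "k - c"] by auto

lemma dcard_eq: "1 \<le> c \<Longrightarrow> c \<le> k \<Longrightarrow> dcard k n S c = dcard k n S' c"
proof (induction c rule: less_induct)
  case (less c)
  have prev: "\<And>a. 1 \<le> a \<Longrightarrow> a < c \<Longrightarrow> dcard k n S a = dcard k n S' a" using less by auto
  have "\<not> dcard k n S c < dcard k n S' c"
    using dcard_step[OF A.theta_elem_axioms B.theta_elem_axioms less.prems prev gamma_at_eq[OF less.prems]]
    by blast
  moreover have "\<not> dcard k n S' c < dcard k n S c"
    using dcard_step[OF B.theta_elem_axioms A.theta_elem_axioms less.prems prev[symmetric]
        gamma_at_eq[OF less.prems, symmetric]]
    by blast
  ultimately show ?case by linarith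
qed

lemma top_col_eq:
  assumes c: "1 \<le> c" "c \<le> k"
  shows "top_col S c = top_col S' c"
proof (rule upward_closed_eq[OF A.top_col_subset _ B.top_col_subset])
  show "card (top_col S c) = card (top_col S' c)"
    using gamma_at_eq[OF c] dcard_eq[OF c] unfolding gamma_at_def by simp
qed (use A.top_col_up_closed B.top_col_up_closed c(2) in auto)

lemma parts_eq:
  assumes c: "1 \<le> c" "c \<le> k"
  shows "minus_part k n S c = minus_part k n S' c \<and> plus_part k n S c = plus_part k n S' c"
proof -
  let ?s = "card (minus_part k n S c)" and ?t = "card (plus_part k n S c)"
  let ?s' = "card (minus_part k n S' c)" and ?t' = "card (plus_part k n S' c)"
  have sum: "?s + ?t = ?s' + ?t'"
    using A.dcard_eq_card_parts[OF c] B.dcard_eq_card_parts[OF c] dcard_eq[OF c] by simp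
  have tags_eq: "F_tag k n S = F_tag k n S'" using F_eq unfolding F_def by simp
  have "?s + ?t = n - k \<longrightarrow> (?s = n - k \<longleftrightarrow> ?s' = n - k)"
    using A.n_in_minus_part_iff_F_tag[OF c] B.n_in_minus_part_iff_F_tag[OF c] tags_eq
      A.n_in_minus_part_iff[OF c] B.n_in_minus_part_iff[OF c] A.dcard_eq_card_parts[OF c] dcard_eq[OF c]
    by auto
  moreover have "1 \<le> ?t \<longrightarrow> n - k \<le> ?s + 1" "1 \<le> ?t' \<longrightarrow> n - k \<le> ?s' + 1"
    using A.card_minus_part_if_plus[OF c] B.card_minus_part_if_plus[OF c] by auto
  moreover have "2 \<le> ?t \<longrightarrow> ?s = n - k" "2 \<le> ?t' \<longrightarrow> ?s' = n - k"
    using A.card_minus_part_if_two_plus[OF c] B.card_minus_part_if_two_plus[OF c] by auto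
  ultimately have "?s = ?s' \<and> ?t = ?t'"
    using card_parts_unique[OF sum A.card_minus_part_le B.card_minus_part_le] by blast
  then show ?thesis
    using A.minus_part_eq_interval[OF c] B.minus_part_eq_interval[OF c]
      A.plus_part_eq_interval[OF c] B.plus_part_eq_interval[OF c] by metis
qed

lemma S_eq: "S = S'"
proof -
  have "\<beta> \<in> S \<longleftrightarrow> \<beta> \<in> S'" if "\<beta> \<in> base_region k n \<union> top_region k" for \<beta>
  proof -
    from that consider (minus) c d where "1 \<le> c" "c \<le> k" "k < d" "d \<le> n" "\<beta> = rm c d"
      | (plus) c d where "1 \<le> c" "c \<le> k" "k < d" "d \<le> n" "\<beta> = rp c d"
      | (top) a c where "1 \<le> a" "a < c" "c \<le> k" "\<beta> = rp a c"
      unfolding base_region_def top_region_def by blast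
    then show ?thesis
    proof cases
      case minus then show ?thesis using parts_eq[of c] unfolding minus_part_def by auto
    next
      case plus then show ?thesis using parts_eq[of c] unfolding plus_part_def by auto
    next
      case top then show ?thesis using top_col_eq[of c] unfolding top_col_def by auto
    qed
  qed
  then show ?thesis using A.S_subset_regions B.S_subset_regions by blast
qed

end

lemma inj_on_F_Theta:
  assumes "1 \<le> k" "k < n"
  shows "inj_on (F k n) (Theta k n)"
proof (rule inj_onI)
  fix S S' assume "S \<in> Theta k n" "S' \<in> Theta k n" "F k n S = F k n S'"
  then interpret theta_pair k n S S' using assms by unfold_locales
  show "S = S'" by (rule S_eq)
qed

lemma F_Theta_subset_Ptilde:
  assumes "1 \<le> k" "k < n"
  shows "F k n ` Theta k n \<subseteq> Ptilde k n"
proof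
  fix x assume "x \<in> F k n ` Theta k n"
  then obtain S where "S \<in> Theta k n" "x = F k n S" by blast
  then interpret theta_elem k n S using assms by unfold_locales
  show "x \<in> Ptilde k n" using F_in_Ptilde \<open>x = F k n S\<close> by simp
qed

section \<open>Every element of $\tilde P(n-k,n)$ is attained\<close>

context og_perm
begin

lemma wval_abs_image: "(\<lambda>p. nat \<bar>s p\<bar>) ` {1..n} = {1..n}"
proof -
  have inj: "inj_on (\<lambda>p. nat \<bar>s p\<bar>) {1..n}" using w_signed_perm unfolding signed_perm_def by auto
  have sub: "(\<lambda>p. nat \<bar>s p\<bar>) ` {1..n} \<subseteq> {1..n}" using wval_abs_range by auto
  have "card ((\<lambda>p. nat \<bar>s p\<bar>) ` {1..n}) = card {1..n}" using card_image[OF inj] by simp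
  then show ?thesis using card_subset_eq[OF _ sub] by auto
qed

lemma inj_on_wval_abs: "inj_on (\<lambda>p. nat \<bar>s p\<bar>) {1..n}" using w_signed_perm unfolding signed_perm_def by auto

lemma card_filter_wval_abs:
  assumes "A \<subseteq> {1..n}"
  shows "card {p\<in>A. P (nat \<bar>s p\<bar>)} = card {u\<in>(\<lambda>p. nat \<bar>s p\<bar>) ` A. P u}"
proof -
  have "{p\<in>A. P (nat \<bar>s p\<bar>)} \<subseteq> {1..n}" using assms by auto
  then have i: "inj_on (\<lambda>p. nat \<bar>s p\<bar>) {p\<in>A. P (nat \<bar>s p\<bar>)}" by (rule inj_on_subset[OF inj_on_wval_abs])
  have "(\<lambda>p. nat \<bar>s p\<bar>) ` {p\<in>A. P (nat \<bar>s p\<bar>)} = {u\<in>(\<lambda>p. nat \<bar>s p\<bar>) ` A. P u}" by auto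
  then show ?thesis using card_image[OF i] by simp
qed

lemma gamma_at_Inv_pos:
  assumes c: "1 \<le> c" "c \<le> k" "s c > 0"
  shows "gamma_at k n S c = card {d\<in>{k<..n}. \<bar>s d\<bar> < s c}"
proof -
  have "top_col S c = {}" unfolding top_col_def using top_rp_in_Inv_iff[of _ c] c by auto
  then show ?thesis unfolding gamma_at_def dcard_def using card_Int_diamond[OF c(1,2)] card_diamond_parts_pos[OF c] by simp
qed

lemma gamma_at_Inv_neg:
  assumes c: "1 \<le> c" "c \<le> k" "s c < 0"
  shows "gamma_at k n S c = (n - k) + (n - nat \<bar>s c\<bar>)"
proof -
  define D1 where "D1 = {d\<in>{k<..n}. \<bar>s c\<bar> < \<bar>s d\<bar>}"
  define D2 where "D2 = {a\<in>{1..<c}. \<bar>s c\<bar> < \<bar>s a\<bar>}"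
  have L: "dcard k n S c = (n - k) + card D1"
    unfolding dcard_def D1_def using card_Int_diamond[OF c(1,2)] card_diamond_parts_neg[OF c] by simp
  have col_eq: "top_col S c = D2"
  proof (rule set_eqI)
    fix a show "a \<in> top_col S c \<longleftrightarrow> a \<in> D2"
    proof (cases "1 \<le> a \<and> a < c")
      case True
      have m: "(s a < 0 \<longrightarrow> s c < 0 \<and> \<bar>s c\<bar> \<le> \<bar>s a\<bar>)" using wval_top_mono[of a c] True c by auto
      have ne: "\<bar>s a\<bar> \<noteq> \<bar>s c\<bar>" using wval_abs_inj[of a c] True c kn by auto
      have nz: "s a \<noteq> 0" using wval_nonzero[of a] True c kn by auto
      have "rp a c \<in> S \<longleftrightarrow> \<bar>s c\<bar> < \<bar>s a\<bar>" using top_rp_in_Inv_iff[of a c] True c m ne nz by auto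
      then show ?thesis unfolding top_col_def D2_def using True by auto
    next
      case False then show ?thesis unfolding top_col_def D2_def by auto
    qed
  qed
  have dj: "D1 \<inter> D2 = {}" unfolding D1_def D2_def using c by auto
  have U: "D1 \<union> D2 = {p\<in>{1..n}. nat \<bar>s c\<bar> < nat \<bar>s p\<bar>}"
  proof (rule set_eqI)
    fix p show "p \<in> D1 \<union> D2 \<longleftrightarrow> p \<in> {p\<in>{1..n}. nat \<bar>s c\<bar> < nat \<bar>s p\<bar>}"
    proof (cases "c \<le> p \<and> p \<le> k")
      case True
      have "\<not> \<bar>s c\<bar> < \<bar>s p\<bar>" using wval_top_mono[of c p] True c by auto
      then show ?thesis unfolding D1_def D2_def using True by auto
    next
      case False then show ?thesis unfolding D1_def D2_def using c kn by auto
    qed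
  qed
  have "card (D1 \<union> D2) = card {u\<in>{1..n}. nat \<bar>s c\<bar> < u}"
    unfolding U using card_filter_wval_abs[of "{1..n}" "\<lambda>u. nat \<bar>s c\<bar> < u"] wval_abs_image by simp
  also have "{u\<in>{1..n}. nat \<bar>s c\<bar> < u} = {nat \<bar>s c\<bar><..n}" using wval_abs_range[of c] c kn by auto
  finally have "card D1 + card D2 = n - nat \<bar>s c\<bar>"
    using card_Un_disjoint[of D1 D2] dj unfolding D1_def D2_def by simp
  then show ?thesis unfolding gamma_at_def L col_eq by simp
qed

lemma dcard_Inv_eq_m_iff: "1 \<le> c \<Longrightarrow> c \<le> k \<Longrightarrow> dcard k n S c = n - k \<longleftrightarrow> (\<forall>d\<in>{k<..n}. \<bar>s d\<bar> < \<bar>s c\<bar>)"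
proof -
  assume c: "1 \<le> c" "c \<le> k"
  have nz: "s c \<noteq> 0" using wval_nonzero c kn by auto
  show ?thesis
  proof (cases "s c > 0")
    case True
    have "dcard k n S c = card {d\<in>{k<..n}. \<bar>s d\<bar> < s c}"
      unfolding dcard_def using card_Int_diamond[OF c] card_diamond_parts_pos[OF c True] by simp
    moreover have "card {d\<in>{k<..n}. \<bar>s d\<bar> < s c} = n - k \<longleftrightarrow> {d\<in>{k<..n}. \<bar>s d\<bar> < s c} = {k<..n}"
    proof
      assume "card {d\<in>{k<..n}. \<bar>s d\<bar> < s c} = n - k"
      moreover have "{d\<in>{k<..n}. \<bar>s d\<bar> < s c} \<subseteq> {k<..n}" by auto
      ultimately show "{d\<in>{k<..n}. \<bar>s d\<bar> < s c} = {k<..n}"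
        using card_subset_eq[of "{k<..n}" "{d\<in>{k<..n}. \<bar>s d\<bar> < s c}"] by simp
    qed simp
    ultimately show ?thesis using True by auto
  next
    case False
    then have neg: "s c < 0" using nz by auto
    have "dcard k n S c = (n - k) + card {d\<in>{k<..n}. \<bar>s c\<bar> < \<bar>s d\<bar>}"
      unfolding dcard_def using card_Int_diamond[OF c] card_diamond_parts_neg[OF c neg] by simp
    moreover have "(\<forall>d\<in>{k<..n}. \<bar>s d\<bar> < \<bar>s c\<bar>) \<longleftrightarrow> {d\<in>{k<..n}. \<bar>s c\<bar> < \<bar>s d\<bar>} = {}"
    proof -
      have "\<And>d. d \<in> {k<..n} \<Longrightarrow> \<bar>s d\<bar> < \<bar>s c\<bar> \<longleftrightarrow> \<not> \<bar>s c\<bar> < \<bar>s d\<bar>"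
      proof -
        fix d assume d: "d \<in> {k<..n}"
        have "\<bar>s d\<bar> \<noteq> \<bar>s c\<bar>" using wval_abs_inj[of d c] d c kn by auto
        then show "\<bar>s d\<bar> < \<bar>s c\<bar> \<longleftrightarrow> \<not> \<bar>s c\<bar> < \<bar>s d\<bar>" by linarith
      qed
      then show ?thesis by blast
    qed
    ultimately show ?thesis by auto
  qed
qed

lemma ex_wval_abs_eq_n: "\<exists>p. 1 \<le> p \<and> p \<le> n \<and> nat \<bar>s p\<bar> = n"
proof -
  have "n \<in> (\<lambda>p. nat \<bar>s p\<bar>) ` {1..n}" using wval_abs_image kn by auto
  then show ?thesis by auto
qed

lemma ex_dcard_Inv_eq_m_iff: "(\<exists>c. 1 \<le> c \<and> c \<le> k \<and> dcard k n S c = n - k) \<longleftrightarrow> (\<exists>c. 1 \<le> c \<and> c \<le> k \<and> nat \<bar>s c\<bar> = n)"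
proof
  assume "\<exists>c. 1 \<le> c \<and> c \<le> k \<and> dcard k n S c = n - k"
  then obtain c where c: "1 \<le> c" "c \<le> k" "\<forall>d\<in>{k<..n}. \<bar>s d\<bar> < \<bar>s c\<bar>" using dcard_Inv_eq_m_iff by blast
  obtain p where p: "1 \<le> p" "p \<le> n" "nat \<bar>s p\<bar> = n" using ex_wval_abs_eq_n by blast
  have "p \<le> k"
  proof (rule ccontr)
    assume "\<not> p \<le> k"
    then have "\<bar>s p\<bar> < \<bar>s c\<bar>" using c p by auto
    moreover have "nat \<bar>s c\<bar> \<le> n" using wval_abs_range[of c] c kn by auto
    ultimately show False using p by linarith
  qed
  then show "\<exists>c. 1 \<le> c \<and> c \<le> k \<and> nat \<bar>s c\<bar> = n" using p by auto
next
  assume "\<exists>c. 1 \<le> c \<and> c \<le> k \<and> nat \<bar>s c\<bar> = n"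
  then obtain c where c: "1 \<le> c" "c \<le> k" "nat \<bar>s c\<bar> = n" by auto
  have "\<forall>d\<in>{k<..n}. \<bar>s d\<bar> < \<bar>s c\<bar>"
  proof
    fix d assume d: "d \<in> {k<..n}"
    have "nat \<bar>s d\<bar> \<le> n" using wval_abs_range[of d] d kn by auto
    moreover have "\<bar>s d\<bar> \<noteq> \<bar>s c\<bar>" using wval_abs_inj[of d c] d c kn by auto
    ultimately show "\<bar>s d\<bar> < \<bar>s c\<bar>" using c by linarith
  qed
  then show "\<exists>c. 1 \<le> c \<and> c \<le> k \<and> dcard k n S c = n - k" using dcard_Inv_eq_m_iff c by blast
qed

lemma F_tag_Inv: "F_tag k n S = (if \<exists>c. 1 \<le> c \<and> c \<le> k \<and> nat \<bar>s c\<bar> = n then (if s n > 0 then 1 else 2) else 0)"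
proof -
  interpret T: theta_elem k n S using kn Inv_in_Theta by unfold_locales auto
  show ?thesis
  proof (cases "\<exists>c. 1 \<le> c \<and> c \<le> k \<and> nat \<bar>s c\<bar> = n")
    case True
    then have ex: "\<exists>c. 1 \<le> c \<and> c \<le> k \<and> dcard k n S c = n - k" using ex_dcard_Inv_eq_m_iff by blast
    define c0 where "c0 = tag_col k n S"
    have c0: "1 \<le> c0" "c0 \<le> k" "dcard k n S c0 = n - k" using T.tag_col_props[OF ex] unfolding c0_def by auto
    have lt: "\<bar>s n\<bar> < \<bar>s c0\<bar>" using dcard_Inv_eq_m_iff[OF c0(1,2)] c0(3) kn by auto
    have nz: "s c0 \<noteq> 0" "s n \<noteq> 0" using wval_nonzero c0 kn by auto
    have "n \<in> minus_part k n S c0 \<longleftrightarrow> s n > 0"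
      unfolding minus_part_def using base_rm_in_Inv_iff[of c0 n] c0 kn lt nz by auto
    then show ?thesis using T.F_tag_eq ex True unfolding c0_def by simp
  next
    case False
    then have "\<not> (\<exists>c. 1 \<le> c \<and> c \<le> k \<and> dcard k n S c = n - k)" using ex_dcard_Inv_eq_m_iff by blast
    then show ?thesis using T.F_tag_eq False by simp
  qed
qed

end

lemma card_less_nth_sorted:
  fixes xs :: "nat list"
  assumes s: "sorted_wrt (<) xs" and i: "i < length xs"
  shows "card {u\<in>set xs. u < xs ! i} = i"
proof -
  have "{u\<in>set xs. u < xs ! i} = set (take i xs)"
  proof (rule set_eqI)
    fix u show "u \<in> {u\<in>set xs. u < xs ! i} \<longleftrightarrow> u \<in> set (take i xs)"
    proof
      assume "u \<in> {u\<in>set xs. u < xs ! i}"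
      then obtain j where j: "j < length xs" "u = xs ! j" "xs ! j < xs ! i" by (auto simp: in_set_conv_nth)
      have "j < i"
      proof (rule ccontr)
        assume "\<not> j < i"
        then have "i = j \<or> i < j" by auto
        then show False using sorted_wrt_nth_less[OF s, of i j] j by auto
      qed
      then show "u \<in> set (take i xs)" using j i by (auto simp: in_set_conv_nth)
    next
      assume "u \<in> set (take i xs)"
      then obtain j where j: "j < i" "u = xs ! j" using i by (auto simp: in_set_conv_nth)
      then show "u \<in> {u\<in>set xs. u < xs ! i}" using sorted_wrt_nth_less[OF s, of j i] i by auto
    qed
  qed
  moreover have "distinct (take i xs)" using s by (simp add: strict_sorted_iff)
  ultimately show ?thesis using i by (simp add: distinct_card)
qed

locale og_preimage =
  fixes k n :: nat and \<gamma> :: "nat list" and t :: nat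
  assumes kn: "1 \<le> k" "k < n" and Pt: "(\<gamma>, t) \<in> Ptilde k n"
begin

abbreviation "m \<equiv> n - k"

definition g :: "nat \<Rightarrow> nat" where "g c = \<gamma> ! (k - c)"

lemma gamma_length: "length \<gamma> = k" using Pt unfolding Ptilde_def by auto
lemma gamma_antimono_step: "\<And>i. i + 1 < k \<Longrightarrow> \<gamma> ! (i + 1) \<le> \<gamma> ! i" using Pt unfolding Ptilde_def by auto
lemma gamma_bound: "\<And>i. i < k \<Longrightarrow> \<gamma> ! i \<le> 2 * n - 1 - k" using Pt unfolding Ptilde_def by auto
lemma gamma_strict_step: "\<And>i. i + 1 < k \<Longrightarrow> \<gamma> ! i > n - k \<Longrightarrow> \<gamma> ! i > \<gamma> ! (i + 1)" using Pt unfolding Ptilde_def by auto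
lemma tag_cond: "(if n - k \<in> set \<gamma> then t \<in> {1, 2} else t = 0)" using Pt unfolding Ptilde_def by auto

lemma g_adj: "2 \<le> c \<Longrightarrow> c \<le> k \<Longrightarrow> g (c - 1) \<le> g c"
proof -
  assume c: "2 \<le> c" "c \<le> k"
  have e: "k - (c - 1) = (k - c) + 1" using c by arith
  show ?thesis unfolding g_def e using gamma_antimono_step[of "k - c"] c by simp
qed

lemma g_mono_aux: "1 \<le> c \<Longrightarrow> c + d \<le> k \<Longrightarrow> g c \<le> g (c + d)"
proof (induction d)
  case 0 then show ?case by simp
next
  case (Suc d)
  then have "g (c + d) \<le> g (c + Suc d)" using g_adj[of "c + Suc d"] by auto
  then show ?case using Suc by auto
qed

lemma g_mono: "1 \<le> c \<Longrightarrow> c \<le> c' \<Longrightarrow> c' \<le> k \<Longrightarrow> g c \<le> g c'"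
  using g_mono_aux[of c "c' - c"] by auto

lemma g_strict1: "2 \<le> c \<Longrightarrow> c \<le> k \<Longrightarrow> g c > m \<Longrightarrow> g (c - 1) < g c"
proof -
  assume c: "2 \<le> c" "c \<le> k" "g c > m"
  have e: "k - (c - 1) = (k - c) + 1" using c by arith
  show ?thesis unfolding g_def e using gamma_strict_step[of "k - c"] c unfolding g_def by simp
qed

lemma g_strict: "1 \<le> c \<Longrightarrow> c < c' \<Longrightarrow> c' \<le> k \<Longrightarrow> g c' > m \<Longrightarrow> g c < g c'"
proof -
  assume c: "1 \<le> c" "c < c'" "c' \<le> k" "g c' > m"
  have "g c \<le> g (c' - 1)" using g_mono[of c "c' - 1"] c by auto
  moreover have "g (c' - 1) < g c'" using g_strict1[of c'] c by auto
  ultimately show ?thesis by simp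
qed

lemma g_bnd: "1 \<le> c \<Longrightarrow> c \<le> k \<Longrightarrow> g c \<le> m + n - 1"
  unfolding g_def using gamma_bound[of "k - c"] kn by auto

definition has_m :: bool where "has_m \<longleftrightarrow> (\<exists>c. 1 \<le> c \<and> c \<le> k \<and> g c = m)"

lemma m_in_gamma_iff: "m \<in> set \<gamma> \<longleftrightarrow> has_m"
proof
  assume "m \<in> set \<gamma>"
  then obtain i where i: "i < k" "\<gamma> ! i = m" using gamma_length by (auto simp: in_set_conv_nth)
  then have "g (k - i) = m" unfolding g_def by simp
  then show has_m unfolding has_m_def using i by (intro exI[of _ "k - i"]) auto
next
  assume has_m
  then obtain c where c: "1 \<le> c" "c \<le> k" "g c = m" unfolding has_m_def by auto
  then have "\<gamma> ! (k - c) = m" unfolding g_def by simp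
  moreover have "k - c < length \<gamma>" using c gamma_length by auto
  ultimately show "m \<in> set \<gamma>" by (metis nth_mem)
qed

definition r0 :: nat where "r0 = card {c\<in>{1..k}. g c > m}"

lemma g_gt_m_eq: "{c\<in>{1..k}. g c > m} = {k - r0<..k}"
proof -
  have "{c\<in>{1..k}. g c > m} = {k - card {c\<in>{1..k}. g c > m}<..k}"
  proof (rule final_segment_eq)
    show "{c\<in>{1..k}. g c > m} \<subseteq> {0<..k}" by auto
  next
    fix x y assume "x \<in> {c\<in>{1..k}. g c > m}" "x < y" "y \<le> k"
    then show "y \<in> {c\<in>{1..k}. g c > m}" using g_mono[of x y] by auto
  qed
  then show ?thesis unfolding r0_def .
qed

lemma r0_le_k: "r0 \<le> k"
proof -
  have "card {c\<in>{1..k}. g c > m} \<le> card {1..k}" by (rule card_mono) auto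
  then show ?thesis unfolding r0_def by simp
qed

lemma g_gt_m_iff: "1 \<le> c \<Longrightarrow> c \<le> k \<Longrightarrow> g c > m \<longleftrightarrow> k - r0 < c"
  using g_gt_m_eq by (auto simp: set_eq_iff)

lemma has_m_pos: "has_m \<Longrightarrow> 1 \<le> k - r0 \<and> g (k - r0) = m"
proof -
  assume has_m
  then obtain c where c: "1 \<le> c" "c \<le> k" "g c = m" unfolding has_m_def by auto
  then have "\<not> k - r0 < c" using g_gt_m_iff[of c] by auto
  then have c2: "c \<le> k - r0" by auto
  then have "g c \<le> g (k - r0)" using g_mono[of c "k - r0"] c by auto
  moreover have "\<not> g (k - r0) > m" using g_gt_m_iff[of "k - r0"] c c2 by auto
  ultimately show ?thesis using c c2 by auto
qed

text \<open>If some part equals $n - k$, the value $n$ goes to that column, and it is barred exactly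
  when this makes the parity of $r$ match the tag: $t = 1$ iff $r$ is even, i.e.\ iff $w(n) > 0$.\<close>

definition r :: nat where "r = (if has_m \<and> ((t = 1) \<noteq> even r0) then Suc r0 else r0)"

lemma r_le_k: "r \<le> k" using has_m_pos r0_le_k unfolding r_def by auto
lemma r_r0: "r = r0 \<or> (r = Suc r0 \<and> has_m)" unfolding r_def by auto

lemma g_ge_m_top: "1 \<le> c \<Longrightarrow> c \<le> k \<Longrightarrow> k - r < c \<Longrightarrow> m \<le> g c"
proof -
  assume c: "1 \<le> c" "c \<le> k" "k - r < c"
  show ?thesis
  proof (cases "k - r0 < c")
    case True then show ?thesis using g_gt_m_iff[OF c(1,2)] by auto
  next
    case False
    then have "r = Suc r0" "has_m" using r_r0 c by auto
    then have "c = k - r0" using False c by auto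
    then show ?thesis using has_m_pos \<open>has_m\<close> by auto
  qed
qed

lemma g_gt_m_top: "1 \<le> c \<Longrightarrow> c \<le> k \<Longrightarrow> k - r + 1 < c \<Longrightarrow> m < g c"
  using g_gt_m_iff[of c] r_r0 by auto

lemma g_le_m_bottom: "1 \<le> c \<Longrightarrow> c \<le> k - r \<Longrightarrow> g c \<le> m"
proof -
  assume c: "1 \<le> c" "c \<le> k - r"
  then have "\<not> k - r0 < c" "c \<le> k" using r_r0 by auto
  then show ?thesis using g_gt_m_iff[OF c(1)] by auto
qed

text \<open>For $w(c) = -z$ one has $\gamma_c = (n - k) + (n - z)$ (\<open>gamma_at_Inv_neg\<close>), which is
  inverted here; for $w(c) = y > 0$, $\gamma_c$ counts the values below $y$ in the final block,
  so $y$ is the $(c - 1 + \gamma_c)$-th smallest value not among the $z$'s.\<close>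

definition zs :: "nat list" where "zs = map (\<lambda>j. m + n - g (k - j)) [0..<r]"

lemma zs_len: "length zs = r" unfolding zs_def by simp
lemma zs_nth: "j < r \<Longrightarrow> zs ! j = m + n - g (k - j)" unfolding zs_def by simp

lemma zs_range: "j < r \<Longrightarrow> 1 \<le> zs ! j \<and> zs ! j \<le> n"
proof -
  assume j: "j < r"
  have c: "1 \<le> k - j" "k - j \<le> k" "k - r < k - j" using j r_le_k by auto
  have "m \<le> g (k - j)" "g (k - j) \<le> m + n - 1" using g_ge_m_top[OF c] g_bnd[OF c(1,2)] by auto
  then show ?thesis using zs_nth[OF j] kn by auto
qed

lemma zs_sorted: "sorted_wrt (<) zs"
proof (rule sorted_wrt_iff_nth_less[THEN iffD2], intro allI impI)
  fix i j assume ij: "i < j" "j < length zs"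
  then have j: "j < r" using zs_len by simp
  have c: "1 \<le> k - j" "k - j < k - i" "k - i \<le> k" using ij j r_le_k by auto
  have "m < g (k - i)" using g_gt_m_top[of "k - i"] ij j r_le_k by auto
  then have "g (k - j) < g (k - i)" using g_strict[OF c] by auto
  moreover have "g (k - i) \<le> m + n - 1" using g_bnd[of "k - i"] c by auto
  moreover have "zs ! i = m + n - g (k - i)" "zs ! j = m + n - g (k - j)" using zs_nth[of i] zs_nth[OF j] ij j by auto
  ultimately show "zs ! i < zs ! j" by arith
qed

lemma zs_dist: "distinct zs" using zs_sorted by (simp add: strict_sorted_iff)
lemma zs_set: "set zs \<subseteq> {1..n}" using zs_range zs_len by (auto simp: in_set_conv_nth)

lemma n_in_zs: "n \<in> set zs \<longleftrightarrow> r = Suc r0"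
proof
  assume "n \<in> set zs"
  then obtain j where j: "j < r" "zs ! j = n" using zs_len by (auto simp: in_set_conv_nth)
  have c: "1 \<le> k - j" "k - j \<le> k" using j r_le_k by auto
  have "g (k - j) \<le> m + n - 1" using g_bnd[OF c] .
  then have "g (k - j) = m" using zs_nth[OF j(1)] j(2) kn by auto
  then have "\<not> k - r0 < k - j" using g_gt_m_iff[OF c] by auto
  then show "r = Suc r0" using j r_r0 r0_le_k by auto
next
  assume rr: "r = Suc r0"
  then have h: "has_m" using r_r0 by auto
  have "r0 < r" using rr by auto
  then have "zs ! r0 = m + n - g (k - r0)" using zs_nth by auto
  then have "zs ! r0 = n" using has_m_pos[OF h] by auto
  then show "n \<in> set zs" using \<open>r0 < r\<close> zs_len by (metis nth_mem)
qed

definition U :: "nat set" where "U = {1..n} - set zs"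
definition us :: "nat list" where "us = sorted_list_of_set U"

lemma U_fin: "finite U" unfolding U_def by auto
lemma U_card: "card U = n - r"
proof -
  have "card U = card {1..n} - card (set zs)" unfolding U_def using zs_set by (simp add: card_Diff_subset)
  then show ?thesis using distinct_card[OF zs_dist] zs_len by simp
qed
lemma us_len: "length us = n - r" unfolding us_def using U_card U_fin by simp
lemma us_set: "set us = U" unfolding us_def using U_fin by simp
lemma us_sorted: "sorted_wrt (<) us" unfolding us_def by (simp add: strict_sorted_iff)

definition ys :: "nat list" where "ys = map (\<lambda>c. us ! (c - 1 + g c)) [1..<k - r + 1]"

lemma ys_len: "length ys = k - r" unfolding ys_def by (simp del: upt_Suc)
lemma ys_nth: "i < k - r \<Longrightarrow> ys ! i = us ! (i + g (i + 1))" unfolding ys_def by (simp del: upt_Suc)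

lemma ys_index_bound: "1 \<le> c \<Longrightarrow> c \<le> k - r \<Longrightarrow> c - 1 + g c < n - r"
  using g_le_m_bottom[of c] kn r_le_k by auto

lemma ys_sorted: "sorted_wrt (<) ys"
proof (rule sorted_wrt_iff_nth_less[THEN iffD2], intro allI impI)
  fix i j assume ij: "i < j" "j < length ys"
  then have j: "j < k - r" using ys_len by simp
  have "g (i + 1) \<le> g (j + 1)" using g_mono[of "i + 1" "j + 1"] ij j by auto
  then have "i + g (i + 1) < j + g (j + 1)" using ij by auto
  moreover have "j + g (j + 1) < length us" using ys_index_bound[of "j + 1"] j us_len by auto
  ultimately have "us ! (i + g (i + 1)) < us ! (j + g (j + 1))" using sorted_wrt_nth_less[OF us_sorted] by auto
  then show "ys ! i < ys ! j" using ys_nth[of i] ys_nth[OF j] ij j by auto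
qed

lemma ys_dist: "distinct ys" using ys_sorted by (simp add: strict_sorted_iff)
lemma ys_set: "set ys \<subseteq> U"
proof
  fix x assume "x \<in> set ys"
  then obtain i where i: "i < k - r" "x = ys ! i" using ys_len by (auto simp: in_set_conv_nth)
  then have "i + g (i + 1) < length us" using ys_index_bound[of "i + 1"] us_len by auto
  then show "x \<in> U" using i ys_nth[of i] us_set by (metis nth_mem)
qed

definition vs :: "nat list" where "vs = sorted_list_of_set (U - set ys)"

lemma vs_set: "set vs = U - set ys" unfolding vs_def using U_fin by simp
lemma vs_len: "length vs = n - k"
proof -
  have "length vs = card (U - set ys)" unfolding vs_def using U_fin by simp
  also have "\<dots> = card U - card (set ys)" using ys_set U_fin by (simp add: card_Diff_subset finite_subset)
  also have "\<dots> = (n - r) - (k - r)" using U_card distinct_card[OF ys_dist] ys_len by simp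
  finally show ?thesis using r_le_k kn by simp
qed
lemma vs_sorted: "sorted_wrt (<) vs" unfolding vs_def by (simp add: strict_sorted_iff)

lemma set_ys_zs_vs: "set (ys @ zs @ vs) = {1..n}"
proof -
  have "set ys \<union> set vs = U" using vs_set ys_set by blast
  moreover have "U \<union> set zs = {1..n}" using zs_set unfolding U_def by blast
  ultimately show ?thesis by auto
qed

lemma distinct_ys_zs_vs: "distinct (ys @ zs @ vs)"
proof -
  have dv: "distinct vs" using vs_sorted by (simp add: strict_sorted_iff)
  have d1: "set ys \<inter> set zs = {}" using ys_set unfolding U_def by blast
  have d2: "set ys \<inter> set vs = {}" using vs_set by blast
  have d3: "set zs \<inter> set vs = {}" using vs_set unfolding U_def by blast
  have "distinct (zs @ vs)" unfolding distinct_append using zs_dist dv d3 by blast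
  moreover have "set ys \<inter> set (zs @ vs) = {}" unfolding set_append using d1 d2 by blast
  ultimately show ?thesis unfolding distinct_append[of ys] using ys_dist by blast
qed

lemma mset_ys_zs_vs: "mset (ys @ zs @ vs) = mset [1..<n + 1]"
proof -
  have e: "set [1..<n + 1] = {1..n}" unfolding set_upt by auto
  have "set (ys @ zs @ vs) = set [1..<n + 1]" unfolding e by (rule set_ys_zs_vs)
  moreover have "distinct [1..<n + 1]" by (rule distinct_upt)
  ultimately show ?thesis using set_eq_iff_mset_eq_distinct[OF distinct_ys_zs_vs] by blast
qed

definition w :: "int list" where "w = og_word r ys zs vs"

lemma ys_zs_vs_pos: "x \<in> set (ys @ zs @ vs) \<Longrightarrow> x \<ge> 1" using set_ys_zs_vs by auto

lemma card_negative_entries: "length (filter (\<lambda>x::int. x < 0) w) = r + (if even r then 0 else 1)"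
proof -
  have "filter (\<lambda>x::int. x < 0) (map int ys) = []" using ys_zs_vs_pos by (auto simp: filter_empty_conv)
  moreover have "filter (\<lambda>x::int. x < 0) (map (\<lambda>z. - int z) (rev zs)) = map (\<lambda>z. - int z) (rev zs)"
  proof -
    have "\<forall>z\<in>set zs. 1 \<le> z" using ys_zs_vs_pos by simp
    then show ?thesis by (auto simp: filter_id_conv)
  qed
  moreover have "filter (\<lambda>x::int. x < 0) (map int (butlast vs)) = []" by (auto simp: filter_empty_conv)
  moreover have "vs \<noteq> []" using vs_len kn by auto
  then have "last vs \<ge> 1" using ys_zs_vs_pos[of "last vs"] by auto
  ultimately show ?thesis unfolding w_def og_word_def using zs_len by auto
qed

lemma w_in_W_OG: "w \<in> W_OG k n"
  unfolding W_OG_def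
  using r_le_k ys_len zs_len vs_len ys_sorted zs_sorted vs_sorted mset_ys_zs_vs card_negative_entries
  unfolding w_def og_word_def by (intro CollectI exI[of _ r] exI[of _ ys] exI[of _ zs] exI[of _ vs]) auto

lemma og_shape_w: "og_shape k n r w"
  unfolding w_def using og_shape_og_word[OF ys_len zs_len vs_len r_le_k kn(2) ys_sorted zs_sorted vs_sorted mset_ys_zs_vs] .

end

context og_preimage
begin

interpretation W: og_perm k n r w using kn og_shape_w by unfold_locales auto

lemma wval_w_eq: "1 \<le> p \<Longrightarrow> p \<le> n \<Longrightarrow> wval w p = (if p \<le> k - r then int (ys ! (p - 1)) else if p \<le> k then - int (zs ! (k - p))
      else if p < n then int (vs ! (p - 1 - k)) else if even r then int (vs ! (n - k - 1)) else - int (vs ! (n - k - 1)))"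
  unfolding wval_def w_def using r_le_k kn by (subst og_word_nth[OF ys_len zs_len vs_len r_le_k kn(2)]) auto

lemma wval_w_top_neg: "1 \<le> c \<Longrightarrow> c \<le> k \<Longrightarrow> k - r < c \<Longrightarrow> wval w c = - int (m + n - g c)"
proof -
  assume c: "1 \<le> c" "c \<le> k" "k - r < c"
  have "wval w c = - int (zs ! (k - c))" using wval_w_eq[of c] c kn by auto
  moreover have "k - c < r" using c by auto
  then have "zs ! (k - c) = m + n - g c" using zs_nth[of "k - c"] c by auto
  ultimately show ?thesis by simp
qed

lemma wval_w_top_pos: "1 \<le> c \<Longrightarrow> c \<le> k - r \<Longrightarrow> wval w c = int (us ! (c - 1 + g c))"
proof -
  assume c: "1 \<le> c" "c \<le> k - r"
  have "wval w c = int (ys ! (c - 1))" using wval_w_eq[of c] c kn by auto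
  moreover have "ys ! (c - 1) = us ! (c - 1 + g c)" using ys_nth[of "c - 1"] c by auto
  ultimately show ?thesis by simp
qed

lemma wval_abs_low_image: "(\<lambda>p. nat \<bar>wval w p\<bar>) ` {k<..n} = set vs"
proof
  show "(\<lambda>p. nat \<bar>wval w p\<bar>) ` {k<..n} \<subseteq> set vs"
  proof
    fix u assume "u \<in> (\<lambda>p. nat \<bar>wval w p\<bar>) ` {k<..n}"
    then obtain d where d: "k < d" "d \<le> n" "u = nat \<bar>wval w d\<bar>" by auto
    have "u = vs ! (d - 1 - k)" using wval_w_eq[of d] d kn by (cases "d < n") auto
    moreover have "d - 1 - k < length vs" using vs_len d by auto
    ultimately show "u \<in> set vs" by simp
  qed
next
  show "set vs \<subseteq> (\<lambda>p. nat \<bar>wval w p\<bar>) ` {k<..n}"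
  proof
    fix u assume "u \<in> set vs"
    then obtain i where i: "i < n - k" "u = vs ! i" using vs_len by (auto simp: in_set_conv_nth)
    define d where "d = i + k + 1"
    have d: "k < d" "d \<le> n" "d - 1 - k = i" using i unfolding d_def by auto
    have "nat \<bar>wval w d\<bar> = vs ! i" using wval_w_eq[of d] d kn i by (cases "d < n") auto
    then show "u \<in> (\<lambda>p. nat \<bar>wval w p\<bar>) ` {k<..n}" using d i by force
  qed
qed

lemma gamma_at_Inv_w: "1 \<le> c \<Longrightarrow> c \<le> k \<Longrightarrow> gamma_at k n (Inv n w) c = g c"
proof -
  assume c: "1 \<le> c" "c \<le> k"
  show ?thesis
  proof (cases "k - r < c")
    case True
    then have s: "wval w c = - int (m + n - g c)" using wval_w_top_neg c by auto
    have b: "m \<le> g c" "g c \<le> m + n - 1" using g_ge_m_top[OF c True] g_bnd[OF c] by auto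
    then have neg: "wval w c < 0" using s kn by auto
    have "gamma_at k n (Inv n w) c = (n - k) + (n - nat \<bar>wval w c\<bar>)" using W.gamma_at_Inv_neg[OF c neg] .
    also have "nat \<bar>wval w c\<bar> = m + n - g c" using s by simp
    finally show ?thesis using b kn by auto
  next
    case False
    then have c2: "c \<le> k - r" by auto
    define i where "i = c - 1 + g c"
    have ib: "i < length us" using ys_index_bound[OF c(1) c2] us_len unfolding i_def by auto
    define y where "y = us ! i"
    have s: "wval w c = int y" using wval_w_top_pos[OF c(1) c2] unfolding y_def i_def by simp
    have yU: "y \<in> U" using ib us_set unfolding y_def by auto
    then have pos: "wval w c > 0" using s unfolding U_def by auto
    have "gamma_at k n (Inv n w) c = card {d\<in>{k<..n}. \<bar>wval w d\<bar> < wval w c}" by (rule W.gamma_at_Inv_pos[OF c pos])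
    also have "{d\<in>{k<..n}. \<bar>wval w d\<bar> < wval w c} = {d\<in>{k<..n}. nat \<bar>wval w d\<bar> < y}" using s by auto
    also have "card \<dots> = card {u\<in>(\<lambda>p. nat \<bar>wval w p\<bar>) ` {k<..n}. u < y}"
      by (rule W.card_filter_wval_abs) auto
    also have "\<dots> = card {u\<in>set vs. u < y}" unfolding wval_abs_low_image ..
    also have "{u\<in>set vs. u < y} = {u\<in>U. u < y} - {u\<in>set ys. u < y}" using vs_set by auto
    also have "card \<dots> = card {u\<in>U. u < y} - card {u\<in>set ys. u < y}"
      using ys_set U_fin by (intro card_Diff_subset) (auto intro: finite_subset)
    also have "card {u\<in>U. u < y} = i" using card_less_nth_sorted[OF us_sorted ib] us_set unfolding y_def by simp
    also have "card {u\<in>set ys. u < y} = c - 1"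
    proof -
      have "y = ys ! (c - 1)" using ys_nth[of "c - 1"] c c2 unfolding y_def i_def by auto
      moreover have "c - 1 < length ys" using c c2 ys_len by auto
      ultimately show ?thesis using card_less_nth_sorted[OF ys_sorted] by simp
    qed
    finally show ?thesis unfolding i_def by simp
  qed
qed

lemma us_last_eq_n: "n \<in> U \<Longrightarrow> us ! (n - r - 1) = n"
proof -
  assume nU: "n \<in> U"
  then obtain i where i: "i < length us" "us ! i = n" using us_set by (metis in_set_conv_nth)
  have l: "n - r - 1 < length us" using us_len r_le_k kn by auto
  show ?thesis
  proof (cases "i = n - r - 1")
    case True then show ?thesis using i by simp
  next
    case False
    then have "i < n - r - 1" using i us_len by auto
    then have "us ! i < us ! (n - r - 1)" using sorted_wrt_nth_less[OF us_sorted] l by auto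
    moreover have "us ! (n - r - 1) \<in> U" using l us_set by (metis nth_mem)
    then have "us ! (n - r - 1) \<le> n" unfolding U_def by auto
    ultimately show ?thesis using i by auto
  qed
qed

lemma us_le_n: "j < length us \<Longrightarrow> us ! j \<le> n"
proof -
  assume "j < length us"
  then have "us ! j \<in> U" using us_set by (metis nth_mem)
  then show ?thesis unfolding U_def by auto
qed

lemma ex_wval_abs_eq_n_iff: "(\<exists>c. 1 \<le> c \<and> c \<le> k \<and> nat \<bar>wval w c\<bar> = n) \<longleftrightarrow> has_m"
proof
  assume "\<exists>c. 1 \<le> c \<and> c \<le> k \<and> nat \<bar>wval w c\<bar> = n"
  then obtain c where c: "1 \<le> c" "c \<le> k" "nat \<bar>wval w c\<bar> = n" by auto
  show has_m
  proof (cases "k - r < c")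
    case True
    then have "m + n - g c = n" using wval_w_top_neg c by auto
    then have "g c = m" using g_bnd[OF c(1,2)] g_ge_m_top[OF c(1,2) True] by auto
    then show has_m unfolding has_m_def using c by auto
  next
    case False
    then have c2: "c \<le> k - r" by auto
    have eq: "us ! (c - 1 + g c) = n" using wval_w_top_pos[OF c(1) c2] c by auto
    show has_m
    proof (rule ccontr)
      assume "\<not> has_m"
      then have "g c < m" using g_le_m_bottom[OF c(1) c2] c unfolding has_m_def by force
      then have lt: "c - 1 + g c < n - r - 1" using c(1) c2 kn r_le_k by arith
      have l: "n - r - 1 < length us" using us_len r_le_k kn by auto
      have "us ! (c - 1 + g c) < us ! (n - r - 1)" using sorted_wrt_nth_less[OF us_sorted lt l] .
      then show False using eq us_le_n[OF l] by auto
    qed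
  qed
next
  assume h: has_m
  show "\<exists>c. 1 \<le> c \<and> c \<le> k \<and> nat \<bar>wval w c\<bar> = n"
  proof (cases "r = Suc r0")
    case True
    define c where "c = k - r0"
    have c: "1 \<le> c" "c \<le> k" "k - r < c" "g c = m" using has_m_pos[OF h] True unfolding c_def by auto
    then have "wval w c = - int n" using wval_w_top_neg[OF c(1-3)] by simp
    then show ?thesis using c by (intro exI[of _ c]) auto
  next
    case False
    then have rr: "r = r0" using r_r0 by auto
    define c where "c = k - r0"
    have c: "1 \<le> c" "c \<le> k - r" "g c = m" using has_m_pos[OF h] rr unfolding c_def by auto
    have nU: "n \<in> U" using n_in_zs False kn unfolding U_def by auto
    have "c - 1 + g c = n - r - 1" using c kn r_le_k rr unfolding c_def by auto
    then have "wval w c = int n" using wval_w_top_pos[OF c(1,2)] us_last_eq_n[OF nU] by simp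
    then show ?thesis using c r_le_k by (intro exI[of _ c]) auto
  qed
qed

lemma F_Inv_w: "F k n (Inv n w) = (\<gamma>, t)"
proof -
  have fst: "fst (F k n (Inv n w)) = \<gamma>"
  proof (rule nth_equalityI)
    show "length (fst (F k n (Inv n w))) = length \<gamma>" using F_fst_len gamma_length by simp
  next
    fix j assume "j < length (fst (F k n (Inv n w)))"
    then have j: "j < k" using F_fst_len by simp
    have "fst (F k n (Inv n w)) ! j = gamma_at k n (Inv n w) (k - j)" using F_fst_nth[OF j] .
    also have "\<dots> = g (k - j)" using gamma_at_Inv_w[of "k - j"] j by auto
    also have "\<dots> = \<gamma> ! j" unfolding g_def using j by simp
    finally show "fst (F k n (Inv n w)) ! j = \<gamma> ! j" .
  qed
  have snd: "F_tag k n (Inv n w) = t"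
  proof (cases has_m)
    case True
    then have t12: "t \<in> {1, 2}" using tag_cond m_in_gamma_iff by auto
    have "even r \<longleftrightarrow> t = 1" using True unfolding r_def by auto
    moreover have "wval w n > 0 \<longleftrightarrow> even r" by (rule W.wval_n_pos_iff)
    ultimately show ?thesis using W.F_tag_Inv ex_wval_abs_eq_n_iff True t12 by auto
  next
    case False
    then have "t = 0" using tag_cond m_in_gamma_iff by auto
    then show ?thesis using W.F_tag_Inv ex_wval_abs_eq_n_iff False by auto
  qed
  show ?thesis using fst snd unfolding F_def by simp
qed

lemma in_F_image: "(\<gamma>, t) \<in> F k n ` Y_OG k n"
  using F_Inv_w w_in_W_OG unfolding Y_OG_def by (metis image_eqI)

end

lemma Ptilde_subset_F_image:
  assumes "1 \<le> k" "k < n"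
  shows "Ptilde k n \<subseteq> F k n ` Y_OG k n"
proof
  fix x assume x: "x \<in> Ptilde k n"
  obtain \<gamma> t where x_eq: "x = (\<gamma>, t)" by (cases x)
  interpret og_preimage k n \<gamma> t using assms x x_eq by unfold_locales auto
  show "x \<in> F k n ` Y_OG k n" using in_F_image x_eq by simp
qed

theorem corollary3p17:
  fixes k n :: nat
  assumes "1 \<le> k" and "k < n"
  shows "Y_OG k n = Theta k n \<and> bij_betw (F k n) (Y_OG k n) (Ptilde k n)"
proof -
  have Y_Theta: "Y_OG k n \<subseteq> Theta k n" using Y_OG_subset_Theta[OF assms] .
  have inj: "inj_on (F k n) (Theta k n)" using inj_on_F_Theta[OF assms] .
  have into: "F k n ` Theta k n \<subseteq> Ptilde k n" using F_Theta_subset_Ptilde[OF assms] .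
  have onto: "Ptilde k n \<subseteq> F k n ` Y_OG k n" using Ptilde_subset_F_image[OF assms] .
  have "Theta k n \<subseteq> Y_OG k n"
  proof
    fix S assume S: "S \<in> Theta k n"
    have "F k n S \<in> F k n ` Y_OG k n" using subsetD[OF onto subsetD[OF into imageI[OF S]]] .
    then obtain S' where S': "S' \<in> Y_OG k n" "F k n S' = F k n S" by (auto elim: imageE)
    have "S' = S" using inj_onD[OF inj S'(2) subsetD[OF Y_Theta S'(1)] S] .
    with S' show "S \<in> Y_OG k n" by simp
  qed
  with Y_Theta have Y_eq: "Y_OG k n = Theta k n" by (rule subset_antisym)
  have "F k n ` Y_OG k n = Ptilde k n" using into onto unfolding Y_eq by (rule subset_antisym)
  then show ?thesis using inj Y_eq unfolding bij_betw_def by simp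
qed

end
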